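(* Any two exceptional bases of $\mathsf{K}_0^{\mathrm{num}}(\mathbb{P}^1\times\mathbb{P}^1)$ are related by mutations up to sign and isometry: for exceptional bases $e_\bullet,f_\bullet$ there is an isometry $\phi$ of $\mathsf{K}_0^{\mathrm{num}}(\mathbb{P}^1\times\mathbb{P}^1)$ with $\phi(\mathsf p)=\mathsf p$ such that $\phi(e_\bullet)$ and $f_\bullet$ are related by a finite sequence of mutations and sign changes.
   Context: $\mathsf{K}_0^{\mathrm{num}}(X)=\mathsf K_0(X)/\ker\chi$ with Euler pairing $\chi$; $\mathsf p=[\mathcal O_x]$ is the class of the skyscraper sheaf of a rational point. An exceptional basis is an ordered $\mathbb{Z}$-basis with upper unitriangular Gram matrix. Mutations: with $\mathsf L_e(v)=v-\chi(e,v)e$, $\mathsf R_e(v)=v-\chi(v,e)e$, $\mathsf L_{i,i+1}(e_\bullet)=(\dots,\mathsf L_{e_i}(e_{i+1}),e_i,\dots)$ and $\mathsf R_{i,i+1}(e_\bullet)=(\dots,e_{i+1},\mathsf R_{e_{i+1}}(e_i),\dots)$ (other entries unchanged). A sign change replaces some $e_i$ by $-e_i$. *)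

theory Defs
  imports "HOL-Analysis.Analysis"
begin

text \<open>Concrete model of K_0^num(P^1 x P^1): the lattice int^4 with basis
  [O], [O(1,0)], [O(0,1)], [O(1,1)] (indices 0,1,2,3), and the Euler pairing
  chi(O(a,b),O(c,d)) = (c-a+1)(d-b+1), whose Gram matrix in this basis is
  [[1,2,2,4],[0,1,0,2],[0,0,1,2],[0,0,0,1]].\<close>

type_synonym K0 = "int ^ 4"

definition zsmult :: "int \<Rightarrow> K0 \<Rightarrow> K0" where
  "zsmult c v = (\<chi> i. c * v $ i)"

definition chi :: "K0 \<Rightarrow> K0 \<Rightarrow> int" where
  "chi v w =
     v$0* w$0 + 2* v$0* w$1 + 2* v$0* w$2 + 4* v$0* w$3
   + v$1* w$1 + 2* v$1* w$3
   + v$2* w$2 + 2* v$2* w$3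
   + v$3* w$3"

text \<open>Class of the skyscraper sheaf of a point (Koszul resolution):
  p = [O] - [O(1,0)] - [O(0,1)] + [O(1,1)].\<close>
definition pt :: K0 where
  "pt = (\<chi> i. if i = 0 then 1 else if i = 1 then -1 else if i = 2 then -1 else 1)"

definition lin_comb :: "(nat \<Rightarrow> int) \<Rightarrow> K0 list \<Rightarrow> K0" where
  "lin_comb c es = (\<Sum>i<length es. zsmult (c i) (es ! i))"

definition is_Zbasis :: "K0 list \<Rightarrow> bool" where
  "is_Zbasis es \<longleftrightarrow>
     (\<forall>v. \<exists>c. v = lin_comb c es) \<and>
     (\<forall>c. lin_comb c es = 0 \<longrightarrow> (\<forall>i<length es. c i = 0))"

definition exceptional_basis :: "K0 list \<Rightarrow> bool" where
  "exceptional_basis es \<longleftrightarrow> is_Zbasis es \<and>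
     (\<forall>i<length es. chi (es!i) (es!i) = 1) \<and>
     (\<forall>i j. i < j \<and> j < length es \<longrightarrow> chi (es!j) (es!i) = 0)"

definition isometry :: "(K0 \<Rightarrow> K0) \<Rightarrow> bool" where
  "isometry \<phi> \<longleftrightarrow> bij \<phi> \<and> (\<forall>v w. \<phi> (v + w) = \<phi> v + \<phi> w) \<and>
     (\<forall>v w. chi (\<phi> v) (\<phi> w) = chi v w)"

definition Lmut :: "K0 \<Rightarrow> K0 \<Rightarrow> K0" where
  "Lmut e v = v - zsmult (chi e v) e"

definition Rmut :: "K0 \<Rightarrow> K0 \<Rightarrow> K0" where
  "Rmut e v = v - zsmult (chi v e) e"

definition Lmut_at :: "nat \<Rightarrow> K0 list \<Rightarrow> K0 list" where
  "Lmut_at i es = es[i := Lmut (es!i) (es!Suc i), Suc i := es!i]"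

definition Rmut_at :: "nat \<Rightarrow> K0 list \<Rightarrow> K0 list" where
  "Rmut_at i es = es[i := es!Suc i, Suc i := Rmut (es!Suc i) (es!i)]"

definition sign_change :: "nat \<Rightarrow> K0 list \<Rightarrow> K0 list" where
  "sign_change i es = es[i := - (es!i)]"

definition mut_step :: "K0 list \<Rightarrow> K0 list \<Rightarrow> bool" where
  "mut_step es fs \<longleftrightarrow>
     (\<exists>i. Suc i < length es \<and> (fs = Lmut_at i es \<or> fs = Rmut_at i es)) \<or>
     (\<exists>i<length es. fs = sign_change i es)"

end

theory Submission
  imports Defs
begin

text \<open>The product of the four twists \<open>x \<mapsto> x - (\<chi>(e,x) - \<chi>(x,e)) e\<close> by the
  members of a basis is the Serre operator; projected to the (rank, degree) plane it becomes a
  2\<times>2 matrix identity, whose traces give Markov-type relations between the ranks and the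
  determinants of cyclically adjacent pairs. These relations force a mutation that strictly
  decreases the sum of the absolute ranks as long as not all ranks are 1; among rank-one bases a
  second descent reaches the Gram matrix of \<open>(\<O>, \<O>(1,0), \<O>(0,1), \<O>(1,1))\<close>. Two bases
  with the same Gram matrix differ by an isometry, which sends \<open>p\<close> to \<open>\<plusminus>p\<close>; a minus
  sign is removed by negating the isometry and all members of the basis.\<close>

lemma numeral_4_eq_0 [simp]: "(4::4) = 0"
  by simp

lemma K0_eq_iff: "v = (w::K0) \<longleftrightarrow> v$0 = w$0 \<and> v$1 = w$1 \<and> v$2 = w$2 \<and> v$3 = w$3"
  by (auto simp: vec_eq_iff forall_4)

definition vec4 :: "int \<Rightarrow> int \<Rightarrow> int \<Rightarrow> int \<Rightarrow> K0" where
  "vec4 a b c d = (\<chi> i. if i = 0 then a else if i = 1 then b else if i = 2 then c else d)"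

lemma vec4_nth [simp]:
  "vec4 a b c d $ 0 = a" "vec4 a b c d $ 1 = b" "vec4 a b c d $ 2 = c" "vec4 a b c d $ 3 = d"
  by (simp_all add: vec4_def)

lemma zsmult_nth [simp]: "zsmult c v $ i = c * v $ i"
  by (simp add: zsmult_def)

lemma pt_nth [simp]: "pt$0 = 1" "pt$1 = -1" "pt$2 = -1" "pt$3 = 1"
  by (simp_all add: pt_def)

lemma chi_bilinear:
  "chi (u + v) w = chi u w + chi v w" "chi w (u + v) = chi w u + chi w v"
  "chi (u - v) w = chi u w - chi v w" "chi w (u - v) = chi w u - chi w v"
  "chi (- u) w = - chi u w" "chi w (- u) = - chi w u"
  "chi (zsmult c u) w = c * chi u w" "chi w (zsmult c u) = c * chi w u"
  "chi 0 w = 0" "chi w 0 = 0"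
  by (simp_all add: chi_def algebra_simps)

text \<open>\<open>deg\<close> is the first Chern class paired with the class (1,1).\<close>

definition rk :: "K0 \<Rightarrow> int" where "rk v = v$0 + v$1 + v$2 + v$3"
definition deg :: "K0 \<Rightarrow> int" where "deg v = v$1 + v$2 + 2 * v$3"
definition cross :: "K0 \<Rightarrow> K0 \<Rightarrow> int" where "cross u v = rk u * deg v - rk v * deg u"

lemma rk_linear:
  "rk (u + v) = rk u + rk v" "rk (u - v) = rk u - rk v" "rk (- u) = - rk u"
  "rk (zsmult c u) = c * rk u"
  by (simp_all add: rk_def algebra_simps)

lemma deg_linear:
  "deg (u + v) = deg u + deg v" "deg (u - v) = deg u - deg v" "deg (- u) = - deg u"
  "deg (zsmult c u) = c * deg u"
  by (simp_all add: deg_def algebra_simps)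

lemma chi_antisym: "chi u v - chi v u = 2 * cross u v"
  by (simp add: chi_def cross_def rk_def deg_def algebra_simps)

lemma chi_eq_two_cross: "chi v u = 0 \<Longrightarrow> chi u v = 2 * cross u v"
  using chi_antisym[of u v] by simp

lemma chi_pt: "chi pt v = rk v" "chi v pt = rk v"
  by (simp_all add: chi_def rk_def)

lemma odd_rk_if_chi_self_eq_1:
  assumes "chi v v = 1" shows "odd (rk v)"
proof -
  have "chi v v = v$0 * v$0 + v$1 * v$1 + v$2 * v$2 + v$3 * v$3
      + 2 * (v$0 * v$1 + v$0 * v$2 + 2 * (v$0 * v$3) + v$1 * v$3 + v$2 * v$3)"
    by (simp add: chi_def algebra_simps)
  then have "v$0 * v$0 + v$1 * v$1 + v$2 * v$2 + v$3 * v$3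
      = 1 - 2 * (v$0 * v$1 + v$0 * v$2 + 2 * (v$0 * v$3) + v$1 * v$3 + v$2 * v$3)"
    using assms by linarith
  then have "odd (v$0 * v$0 + v$1 * v$1 + v$2 * v$2 + v$3 * v$3)"
    by simp
  then show ?thesis by (simp add: rk_def)
qed

section \<open>Exceptional bases have four elements\<close>

lemma unitriangular_coeffs_zero:
  fixes c :: "nat \<Rightarrow> 'a::semiring_1" and g :: "nat \<Rightarrow> nat \<Rightarrow> 'a"
  assumes comb: "\<And>j. j < n \<Longrightarrow> (\<Sum>k<n. c k * g k j) = 0"
    and diag: "\<And>j. j < n \<Longrightarrow> g j j = 1"
    and upper: "\<And>j k. j < k \<Longrightarrow> k < n \<Longrightarrow> g k j = 0"
  shows "i < n \<Longrightarrow> c i = 0"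
proof (induction i rule: less_induct)
  case (less i)
  have "0 = (\<Sum>k<n. c k * g k i)"
    using comb less.prems by simp
  also have "\<dots> = (\<Sum>k\<in>{i}. c k * g k i)"
  proof (rule sum.mono_neutral_right)
    show "\<forall>k\<in>{..<n} - {i}. c k * g k i = 0"
    proof
      fix k assume k: "k \<in> {..<n} - {i}"
      show "c k * g k i = 0"
      proof (cases "k < i")
        case True
        then show ?thesis using less.IH k by simp
      next
        case False
        then show ?thesis using upper[of i k] k by simp
      qed
    qed
  qed (use less.prems in auto)
  also have "\<dots> = c i"
    using diag less.prems by simp
  finally show ?case by simp
qed

definition real_vec :: "K0 \<Rightarrow> real^4" where
  "real_vec v = (\<chi> i. of_int (v$i))"

definition chi_real :: "real^4 \<Rightarrow> real^4 \<Rightarrow> real" where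
  "chi_real v w =
     v$0* w$0 + 2* v$0* w$1 + 2* v$0* w$2 + 4* v$0* w$3
   + v$1* w$1 + 2* v$1* w$3
   + v$2* w$2 + 2* v$2* w$3
   + v$3* w$3"

lemma chi_real_real_vec: "chi_real (real_vec u) (real_vec v) = of_int (chi u v)"
  by (simp add: chi_real_def chi_def real_vec_def)

lemma chi_real_sum_left: "chi_real (\<Sum>k\<in>I. c k *\<^sub>R x k) y = (\<Sum>k\<in>I. c k * chi_real (x k) y)"
  by (induction I rule: infinite_finite_induct) (simp_all add: chi_real_def algebra_simps)

lemma inj_real_vec: "inj real_vec"
  by (rule injI) (simp add: real_vec_def vec_eq_iff)

lemma real_vec_lin_comb:
  "real_vec (lin_comb c es) = (\<Sum>i<length es. of_int (c i) *\<^sub>R real_vec (es!i))"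
proof -
  have "real_vec (\<Sum>i<n. zsmult (c i) (es!i)) = (\<Sum>i<n. of_int (c i) *\<^sub>R real_vec (es!i))" for n
    by (induction n) (simp_all add: real_vec_def vec_eq_iff)
  then show ?thesis by (simp add: lin_comb_def)
qed

lemma real_vec_in_span:
  assumes "is_Zbasis es" shows "real_vec v \<in> span (real_vec ` set es)"
proof -
  obtain c where v: "v = lin_comb c es"
    using assms unfolding is_Zbasis_def by blast
  have "(\<Sum>i<length es. of_int (c i) *\<^sub>R real_vec (es!i)) \<in> span (real_vec ` set es)"
    by (intro span_sum span_scale span_base) auto
  then show ?thesis
    by (simp add: v real_vec_lin_comb)
qed

lemma exceptional_basis_distinct:
  assumes "exceptional_basis es" shows "distinct es"
  unfolding distinct_conv_nth
proof (intro allI impI)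
  fix i j assume ij: "i < length es" "j < length es" "i \<noteq> j"
  have "chi (es!i) (es!j) = 0 \<or> chi (es!j) (es!i) = 0"
    using assms ij unfolding exceptional_basis_def by (metis nat_neq_iff)
  moreover have "chi (es!i) (es!i) = 1"
    using assms ij unfolding exceptional_basis_def by blast
  ultimately show "es!i \<noteq> es!j" by auto
qed

lemma exceptional_basis_independent:
  assumes ex: "exceptional_basis es"
  shows "independent (real_vec ` set es)"
proof -
  let ?v = "\<lambda>k. real_vec (es!k)"
  have inj: "inj_on ?v {..<length es}"
    using exceptional_basis_distinct[OF ex]
    by (auto simp: inj_on_def inj_eq[OF inj_real_vec] nth_eq_iff_index_eq)
  have set_eq: "real_vec ` set es = ?v ` {..<length es}"
    by (auto simp: set_conv_nth)
  have "u v = 0" if comb: "(\<Sum>v\<in>real_vec ` set es. u v *\<^sub>R v) = 0" and v: "v \<in> real_vec ` set es"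
    for u v
  proof -
    let ?c = "\<lambda>k. u (?v k)"
    have zero: "(\<Sum>k<length es. ?c k *\<^sub>R ?v k) = 0"
      using comb by (simp add: set_eq sum.reindex[OF inj])
    have sums: "(\<Sum>k<length es. ?c k * of_int (chi (es!k) (es!j))) = 0" for j
    proof -
      have "chi_real (\<Sum>k<length es. ?c k *\<^sub>R ?v k) (?v j) = 0"
        unfolding zero by (simp add: chi_real_def)
      then show ?thesis
        by (simp add: chi_real_sum_left chi_real_real_vec)
    qed
    have "?c k = 0" if "k < length es" for k
      by (rule unitriangular_coeffs_zero[where c = ?c and n = "length es"
            and g = "\<lambda>k j. of_int (chi (es!k) (es!j))"])
        (use sums ex that in \<open>auto simp: exceptional_basis_def\<close>)
    then show ?thesis
      using v by (auto simp: set_conv_nth)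
  qed
  then show ?thesis
    by (auto simp: dependent_finite)
qed

lemma exceptional_basis_length:
  assumes ex: "exceptional_basis es" shows "length es = 4"
proof -
  let ?S = "real_vec ` set es"
  have card: "card ?S = length es"
    using exceptional_basis_distinct[OF ex] inj_real_vec
    by (simp add: card_image distinct_card inj_on_subset)
  have "card ?S \<le> 4"
    using independent_bound[OF exceptional_basis_independent[OF ex]] by simp
  moreover have "Basis \<subseteq> span ?S"
  proof
    fix b :: "real^4" assume "b \<in> Basis"
    then obtain i where "b = axis i 1"
      by (auto simp: Basis_vec_def)
    then have "b = real_vec (axis i 1)"
      by (simp add: real_vec_def axis_def vec_eq_iff)
    then show "b \<in> span ?S"
      using ex real_vec_in_span by (simp add: exceptional_basis_def)
  qed
  then have "UNIV \<subseteq> span ?S"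
    by (metis span_Basis span_minimal subspace_span)
  then have "4 \<le> card ?S"
    using span_card_ge_dim[of ?S UNIV] by simp
  ultimately show ?thesis
    using card by simp
qed

lemma chi_sum_left: "chi (\<Sum>i\<in>I. f i) w = (\<Sum>i\<in>I. chi (f i) w)"
  by (induction I rule: infinite_finite_induct) (simp_all add: chi_bilinear)

lemma chi_lin_comb_left: "chi (lin_comb c es) w = (\<Sum>i<length es. c i * chi (es!i) w)"
  by (simp add: lin_comb_def chi_sum_left chi_bilinear)

lemma exceptional_basis_iff:
  "exceptional_basis es \<longleftrightarrow> (\<forall>v. \<exists>c. v = lin_comb c es) \<and>
     (\<forall>i<length es. chi (es!i) (es!i) = 1) \<and>
     (\<forall>i j. i < j \<and> j < length es \<longrightarrow> chi (es!j) (es!i) = 0)"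
proof -
  have "c i = 0"
    if "lin_comb c es = 0" "i < length es"
      and "\<forall>i<length es. chi (es!i) (es!i) = 1"
      and "\<forall>i j. i < j \<and> j < length es \<longrightarrow> chi (es!j) (es!i) = 0" for c i
  proof (rule unitriangular_coeffs_zero[where c = c and n = "length es"
        and g = "\<lambda>k j. chi (es!k) (es!j)"])
    show "(\<Sum>k<length es. c k * chi (es!k) (es!j)) = 0" for j
      using chi_lin_comb_left[of c es "es!j"] that(1) by (simp add: chi_bilinear)
  qed (use that in auto)
  then show ?thesis
    unfolding exceptional_basis_def is_Zbasis_def by blast
qed

section \<open>Mutations of four-element bases\<close>

definition exc_gram4 :: "K0 \<Rightarrow> K0 \<Rightarrow> K0 \<Rightarrow> K0 \<Rightarrow> bool" where
  "exc_gram4 a b c d \<longleftrightarrow> chi a a = 1 \<and> chi b b = 1 \<and> chi c c = 1 \<and> chi d d = 1 \<and>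
     chi b a = 0 \<and> chi c a = 0 \<and> chi d a = 0 \<and> chi c b = 0 \<and> chi d b = 0 \<and> chi d c = 0"

definition comb4 :: "int \<Rightarrow> int \<Rightarrow> int \<Rightarrow> int \<Rightarrow> K0 \<Rightarrow> K0 \<Rightarrow> K0 \<Rightarrow> K0 \<Rightarrow> K0" where
  "comb4 k0 k1 k2 k3 a b c d = zsmult k0 a + zsmult k1 b + zsmult k2 c + zsmult k3 d"

definition in_span4 :: "K0 \<Rightarrow> K0 \<Rightarrow> K0 \<Rightarrow> K0 \<Rightarrow> K0 \<Rightarrow> bool" where
  "in_span4 x a b c d \<longleftrightarrow> (\<exists>k0 k1 k2 k3. x = comb4 k0 k1 k2 k3 a b c d)"

definition exc4 :: "K0 \<Rightarrow> K0 \<Rightarrow> K0 \<Rightarrow> K0 \<Rightarrow> bool" where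
  "exc4 a b c d \<longleftrightarrow> exc_gram4 a b c d \<and> (\<forall>x. in_span4 x a b c d)"

lemma lin_comb_4: "lin_comb k [a, b, c, d] = comb4 (k 0) (k 1) (k 2) (k 3) a b c d"
  by (simp add: lin_comb_def comb4_def numeral_eq_Suc lessThan_Suc add.assoc)

lemma all_less_4: "(\<forall>i<4. P i) \<longleftrightarrow> P 0 \<and> P 1 \<and> P 2 \<and> P (3::nat)"
  by (auto simp: numeral_eq_Suc less_Suc_eq)

lemma all_pairs_less_4:
  "(\<forall>i j. i < j \<and> j < 4 \<longrightarrow> P i j) \<longleftrightarrow> P 0 1 \<and> P 0 2 \<and> P 0 3 \<and> P 1 2 \<and> P 1 3 \<and> P 2 (3::nat)"
  by (auto simp: numeral_eq_Suc less_Suc_eq)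

lemma in_span4_iff_lin_comb: "in_span4 x a b c d \<longleftrightarrow> (\<exists>k. x = lin_comb k [a, b, c, d])"
proof
  assume "in_span4 x a b c d"
  then obtain k0 k1 k2 k3 where "x = comb4 k0 k1 k2 k3 a b c d"
    by (auto simp: in_span4_def)
  then show "\<exists>k. x = lin_comb k [a, b, c, d]"
    by (intro exI[of _ "\<lambda>i. if i = 0 then k0 else if i = 1 then k1 else if i = 2 then k2 else k3"])
      (simp add: lin_comb_4)
qed (auto simp: in_span4_def lin_comb_4)

lemma exceptional_basis_4_iff: "exceptional_basis [a, b, c, d] \<longleftrightarrow> exc4 a b c d"
proof -
  have span: "(\<forall>v. \<exists>k. v = lin_comb k [a, b, c, d]) \<longleftrightarrow> (\<forall>x. in_span4 x a b c d)"
    by (simp add: in_span4_iff_lin_comb)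
  have len: "length [a, b, c, d] = 4"
    by simp
  have "(\<forall>i<length [a, b, c, d]. chi ([a, b, c, d]!i) ([a, b, c, d]!i) = 1) \<and>
      (\<forall>i j. i < j \<and> j < length [a, b, c, d] \<longrightarrow> chi ([a, b, c, d]!j) ([a, b, c, d]!i) = 0)
      \<longleftrightarrow> exc_gram4 a b c d"
    unfolding len all_less_4 all_pairs_less_4 by (auto simp: exc_gram4_def)
  then show ?thesis
    unfolding exceptional_basis_iff exc4_def span by blast
qed

lemma exceptional_basis_4E:
  assumes "exceptional_basis es"
  obtains a b c d where "es = [a, b, c, d]" "exc4 a b c d"
proof -
  obtain a b c d where "es = [a, b, c, d]"
    using exceptional_basis_length[OF assms] by (auto simp: numeral_eq_Suc length_Suc_conv)
  with assms that show ?thesis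
    using exceptional_basis_4_iff by blast
qed

lemma in_span4_base [simp]:
  "in_span4 a a b c d" "in_span4 b a b c d" "in_span4 c a b c d" "in_span4 d a b c d"
  unfolding in_span4_def comb4_def
  by (rule exI[of _ 1] exI[of _ 0], simp add: K0_eq_iff)+

lemma in_span4_add:
  assumes "in_span4 x a b c d" "in_span4 y a b c d" shows "in_span4 (x + y) a b c d"
proof -
  obtain k0 k1 k2 k3 m0 m1 m2 m3 where
    "x = comb4 k0 k1 k2 k3 a b c d" "y = comb4 m0 m1 m2 m3 a b c d"
    using assms unfolding in_span4_def by blast
  then have "x + y = comb4 (k0 + m0) (k1 + m1) (k2 + m2) (k3 + m3) a b c d"
    by (simp add: comb4_def K0_eq_iff algebra_simps)
  then show ?thesis
    unfolding in_span4_def by blast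
qed

lemma in_span4_zsmult:
  assumes "in_span4 x a b c d" shows "in_span4 (zsmult k x) a b c d"
proof -
  obtain k0 k1 k2 k3 where "x = comb4 k0 k1 k2 k3 a b c d"
    using assms unfolding in_span4_def by blast
  then have "zsmult k x = comb4 (k * k0) (k * k1) (k * k2) (k * k3) a b c d"
    by (simp add: comb4_def K0_eq_iff algebra_simps)
  then show ?thesis
    unfolding in_span4_def by blast
qed

lemma in_span4_comb4:
  assumes "in_span4 a a' b' c' d'" "in_span4 b a' b' c' d'" "in_span4 c a' b' c' d'" "in_span4 d a' b' c' d'"
  shows "in_span4 (comb4 k0 k1 k2 k3 a b c d) a' b' c' d'"
  unfolding comb4_def using assms by (intro in_span4_add in_span4_zsmult)

lemma in_span4_Lmut_cancel:
  assumes "in_span4 (Lmut e v) a b c d" "in_span4 e a b c d" shows "in_span4 v a b c d"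
proof -
  have "v = Lmut e v + zsmult (chi e v) e"
    by (simp add: Lmut_def K0_eq_iff)
  then show ?thesis
    using assms by (metis in_span4_add in_span4_zsmult)
qed

lemma in_span4_Rmut_cancel:
  assumes "in_span4 (Rmut e v) a b c d" "in_span4 e a b c d" shows "in_span4 v a b c d"
proof -
  have "v = Rmut e v + zsmult (chi v e) e"
    by (simp add: Rmut_def K0_eq_iff)
  then show ?thesis
    using assms by (metis in_span4_add in_span4_zsmult)
qed

lemma in_span4_uminus_cancel:
  assumes "in_span4 (- v) a b c d" shows "in_span4 v a b c d"
proof -
  have "v = zsmult (-1) (- v)"
    by (simp add: K0_eq_iff)
  then show ?thesis
    using assms by (metis in_span4_zsmult)
qed

lemma exc4_change_basis:
  assumes "exc4 a b c d" "exc_gram4 a' b' c' d'"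
    and "in_span4 a a' b' c' d'" "in_span4 b a' b' c' d'" "in_span4 c a' b' c' d'" "in_span4 d a' b' c' d'"
  shows "exc4 a' b' c' d'"
  using assms in_span4_comb4 unfolding exc4_def in_span4_def by metis

lemma exc4_mutations:
  assumes ex: "exc4 a b c d"
  shows "exc4 (Lmut a b) a c d" "exc4 a (Lmut b c) b d" "exc4 a b (Lmut c d) c"
    and "exc4 b (Rmut b a) c d" "exc4 a c (Rmut c b) d" "exc4 a b d (Rmut d c)"
    and "exc4 (- a) b c d" "exc4 a (- b) c d" "exc4 a b (- c) d" "exc4 a b c (- d)"
proof -
  have g: "exc_gram4 a b c d"
    using ex by (simp add: exc4_def)
  note gram = g[unfolded exc_gram4_def]
  note change = exc4_change_basis[OF ex]
  show "exc4 (Lmut a b) a c d"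
    by (rule change) (auto simp: exc_gram4_def Lmut_def chi_bilinear gram intro: in_span4_Lmut_cancel[of a b])
  show "exc4 a (Lmut b c) b d"
    by (rule change) (auto simp: exc_gram4_def Lmut_def chi_bilinear gram intro: in_span4_Lmut_cancel[of b c])
  show "exc4 a b (Lmut c d) c"
    by (rule change) (auto simp: exc_gram4_def Lmut_def chi_bilinear gram intro: in_span4_Lmut_cancel[of c d])
  show "exc4 b (Rmut b a) c d"
    by (rule change) (auto simp: exc_gram4_def Rmut_def chi_bilinear gram intro: in_span4_Rmut_cancel[of b a])
  show "exc4 a c (Rmut c b) d"
    by (rule change) (auto simp: exc_gram4_def Rmut_def chi_bilinear gram intro: in_span4_Rmut_cancel[of c b])
  show "exc4 a b d (Rmut d c)"
    by (rule change) (auto simp: exc_gram4_def Rmut_def chi_bilinear gram intro: in_span4_Rmut_cancel[of d c])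
  show "exc4 (- a) b c d"
    by (rule change) (auto simp: exc_gram4_def chi_bilinear gram intro: in_span4_uminus_cancel)
  show "exc4 a (- b) c d"
    by (rule change) (auto simp: exc_gram4_def chi_bilinear gram intro: in_span4_uminus_cancel)
  show "exc4 a b (- c) d"
    by (rule change) (auto simp: exc_gram4_def chi_bilinear gram intro: in_span4_uminus_cancel)
  show "exc4 a b c (- d)"
    by (rule change) (auto simp: exc_gram4_def chi_bilinear gram intro: in_span4_uminus_cancel)
qed

lemma ex_less_3: "(\<exists>i. Suc i < 4 \<and> P i) \<longleftrightarrow> P 0 \<or> P 1 \<or> P (2::nat)"
  by (auto simp: numeral_eq_Suc less_Suc_eq)

lemma ex_less_4: "(\<exists>i<4. P i) \<longleftrightarrow> P 0 \<or> P 1 \<or> P 2 \<or> P (3::nat)"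
  by (auto simp: numeral_eq_Suc less_Suc_eq)

lemma mut_step_4_iff:
  "mut_step [a, b, c, d] fs \<longleftrightarrow>
    fs = [Lmut a b, a, c, d] \<or> fs = [a, Lmut b c, b, d] \<or> fs = [a, b, Lmut c d, c] \<or>
    fs = [b, Rmut b a, c, d] \<or> fs = [a, c, Rmut c b, d] \<or> fs = [a, b, d, Rmut d c] \<or>
    fs = [- a, b, c, d] \<or> fs = [a, - b, c, d] \<or> fs = [a, b, - c, d] \<or> fs = [a, b, c, - d]"
proof -
  have len: "length [a, b, c, d] = 4"
    by simp
  show ?thesis
    unfolding mut_step_def len ex_less_3 ex_less_4
    by (auto simp: Lmut_at_def Rmut_at_def sign_change_def numeral_eq_Suc)
qed

lemma mut_step_exceptional:
  assumes "exceptional_basis es" "mut_step es fs" shows "exceptional_basis fs"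
proof -
  obtain a b c d where "es = [a, b, c, d]" "exc4 a b c d"
    using assms(1) by (rule exceptional_basis_4E)
  then show ?thesis
    using assms(2) exc4_mutations by (auto simp: mut_step_4_iff exceptional_basis_4_iff)
qed

lemma mut_steps_exceptional:
  assumes "mut_step\<^sup>*\<^sup>* es fs" "exceptional_basis es" shows "exceptional_basis fs"
  using assms by (induction rule: rtranclp_induct) (auto intro: mut_step_exceptional)

lemma mut_step_sym:
  assumes "exceptional_basis es" "mut_step es fs" shows "mut_step fs es"
proof -
  obtain a b c d where es: "es = [a, b, c, d]" and "exc4 a b c d"
    using assms(1) by (rule exceptional_basis_4E)
  then have gram: "exc_gram4 a b c d"
    by (simp add: exc4_def)
  have "Rmut a (Lmut a b) = b" "Rmut b (Lmut b c) = c" "Rmut c (Lmut c d) = d"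
    "Lmut b (Rmut b a) = a" "Lmut c (Rmut c b) = b" "Lmut d (Rmut d c) = c"
    using gram by (simp_all add: exc_gram4_def Rmut_def Lmut_def chi_bilinear K0_eq_iff)
  then show ?thesis
    using assms(2) unfolding es mut_step_4_iff by (elim disjE) (simp_all add: mut_step_4_iff)
qed

lemma mut_steps_sym:
  assumes "mut_step\<^sup>*\<^sup>* es fs" "exceptional_basis es" shows "mut_step\<^sup>*\<^sup>* fs es"
  using assms
proof (induction rule: rtranclp_induct)
  case (step y z)
  then have "mut_step z y"
    using mut_step_sym mut_steps_exceptional by blast
  then show ?case
    using step by (meson converse_rtranclp_into_rtranclp)
qed simp

lemma isometry_additive: "isometry \<phi> \<Longrightarrow> Modules.additive \<phi>"
  by (simp add: isometry_def Modules.additive_def)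

lemma isometry_chi: "isometry \<phi> \<Longrightarrow> chi (\<phi> u) (\<phi> v) = chi u v"
  by (simp add: isometry_def)

lemma isometry_minus: "isometry \<phi> \<Longrightarrow> \<phi> (- v) = - \<phi> v"
  by (rule additive.minus[OF isometry_additive])

lemma isometry_zsmult:
  assumes iso: "isometry \<phi>" shows "\<phi> (zsmult k v) = zsmult k (\<phi> v)"
proof (induction k rule: int_induct[where k = 0])
  case base
  have "zsmult 0 v = 0" "zsmult 0 (\<phi> v) = 0"
    by (simp_all add: K0_eq_iff)
  then show ?case
    using additive.zero[OF isometry_additive[OF iso]] by simp
next
  case (step1 i)
  have "zsmult (i + 1) w = zsmult i w + w" for w
    by (simp add: K0_eq_iff algebra_simps)
  then show ?case
    using step1 additive.add[OF isometry_additive[OF iso]] by simp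
next
  case (step2 i)
  have "zsmult (i - 1) w = zsmult i w - w" for w
    by (simp add: K0_eq_iff algebra_simps)
  then show ?case
    using step2 additive.diff[OF isometry_additive[OF iso]] by simp
qed

lemma isometry_Lmut: "isometry \<phi> \<Longrightarrow> \<phi> (Lmut e v) = Lmut (\<phi> e) (\<phi> v)"
  by (simp add: Lmut_def additive.diff[OF isometry_additive] isometry_zsmult isometry_chi)

lemma isometry_Rmut: "isometry \<phi> \<Longrightarrow> \<phi> (Rmut e v) = Rmut (\<phi> e) (\<phi> v)"
  by (simp add: Rmut_def additive.diff[OF isometry_additive] isometry_zsmult isometry_chi)

lemma mut_step_map_isometry:
  assumes iso: "isometry \<phi>" and "mut_step es fs" shows "mut_step (map \<phi> es) (map \<phi> fs)"
proof -
  have "map \<phi> (Lmut_at i es) = Lmut_at i (map \<phi> es)"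
    "map \<phi> (Rmut_at i es) = Rmut_at i (map \<phi> es)" if "Suc i < length es" for i
    using that by (simp_all add: Lmut_at_def Rmut_at_def map_update isometry_Lmut isometry_Rmut iso)
  moreover have "map \<phi> (sign_change i es) = sign_change i (map \<phi> es)" if "i < length es" for i
    using that by (simp add: sign_change_def map_update isometry_minus iso)
  ultimately show ?thesis
    using assms(2) unfolding mut_step_def by auto
qed

lemma mut_steps_map_isometry:
  assumes "isometry \<phi>" "mut_step\<^sup>*\<^sup>* es fs" shows "mut_step\<^sup>*\<^sup>* (map \<phi> es) (map \<phi> fs)"
  using assms(2)
  by (induction rule: rtranclp_induct) (auto intro: mut_step_map_isometry[OF assms(1)] rtranclp.rtrancl_into_rtrancl)

lemma isometry_uminus: "isometry uminus"
  unfolding isometry_def by (auto simp: chi_bilinear intro: o_bij[of uminus])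

lemma mut_steps_neg_4: "mut_step\<^sup>*\<^sup>* (map uminus [a, b, c, d]) [a, b, c, d]"
proof -
  have "mut_step [- a, - b, - c, - d] [a, - b, - c, - d]" "mut_step [a, - b, - c, - d] [a, b, - c, - d]"
    "mut_step [a, b, - c, - d] [a, b, c, - d]" "mut_step [a, b, c, - d] [a, b, c, d]"
    using mut_step_4_iff[of "- a"] mut_step_4_iff[of a "- b"] mut_step_4_iff[of a b "- c"]
      mut_step_4_iff[of a b c "- d"]
    by simp_all
  then show ?thesis
    by (simp add: converse_rtranclp_into_rtranclp)
qed

section \<open>Twists and the Serre operator\<close>

definition twist :: "K0 \<Rightarrow> K0 \<Rightarrow> K0" where
  "twist e x = x - zsmult (chi e x - chi x e) e"

text \<open>The Serre functor \<open>- \<otimes> \<O>(-2,-2)[2]\<close> on classes; its matrix is forced by Serre duality,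
  i.e. by \<open>chi_serre_op\<close> below.\<close>

definition serre_op :: "K0 \<Rightarrow> K0" where
  "serre_op x = vec4 (9*x$0 + 6*x$1 + 6*x$2 + 4*x$3) (-6*x$0 - 3*x$1 - 4*x$2 - 2*x$3)
                     (-6*x$0 - 4*x$1 - 3*x$2 - 2*x$3) (4*x$0 + 2*x$1 + 2*x$2 + x$3)"

lemma chi_serre_op: "chi v (serre_op x) = chi x v"
  by (simp add: serre_op_def chi_def algebra_simps)

lemma chi_twist:
  "chi u (twist e y) = chi u y - (chi e y - chi y e) * chi u e"
  "chi (twist e y) u = chi y u - (chi e y - chi y e) * chi e u"
  by (simp_all add: twist_def chi_bilinear)

lemma chi_comb4_left:
  "chi (comb4 k0 k1 k2 k3 a b c d) u = k0 * chi a u + k1 * chi b u + k2 * chi c u + k3 * chi d u"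
  by (simp add: comb4_def chi_bilinear)

lemma chi_left_inj:
  assumes "\<And>v. chi v y = chi v z" shows "y = z"
proof -
  have "chi (vec4 1 0 0 0) y = chi (vec4 1 0 0 0) z" "chi (vec4 0 1 0 0) y = chi (vec4 0 1 0 0) z"
    "chi (vec4 0 0 1 0) y = chi (vec4 0 0 1 0) z" "chi (vec4 0 0 0 1) y = chi (vec4 0 0 0 1) z"
    using assms by blast+
  then show ?thesis
    by (simp add: chi_def K0_eq_iff)
qed

text \<open>Pairing the product of the twists with a basis vector only involves the Gram matrix, and
  the pairings with the basis determine a class.\<close>

lemma twists_eq_serre_op:
  assumes ex: "exc4 a b c d"
  shows "twist a (twist b (twist c (twist d x))) = serre_op x" (is "?y = _")
proof (rule chi_left_inj)
  fix v
  have g: "exc_gram4 a b c d" and sp: "in_span4 v a b c d"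
    using ex by (simp_all add: exc4_def)
  have basis: "chi a ?y = chi x a" "chi b ?y = chi x b" "chi c ?y = chi x c" "chi d ?y = chi x d"
    using g by (simp_all add: exc_gram4_def chi_twist)
  obtain k0 k1 k2 k3 where v: "v = comb4 k0 k1 k2 k3 a b c d"
    using sp by (auto simp: in_span4_def)
  show "chi v ?y = chi v (serre_op x)"
    by (simp add: v chi_comb4_left basis chi_serre_op comb4_def chi_bilinear)
qed

lemma Lmut_eq_twist: "chi v e = 0 \<Longrightarrow> Lmut e v = twist e v"
  by (simp add: Lmut_def twist_def)

lemma twist_self: "twist e e = e"
  by (simp add: twist_def K0_eq_iff)

lemma mut_steps_rotate:
  assumes ex: "exc4 a b c d"
  shows "mut_step\<^sup>*\<^sup>* [a, b, c, d] [serre_op d, a, b, c]" and "exc4 (serre_op d) a b c"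
proof -
  have g: "exc_gram4 a b c d"
    using ex by (simp add: exc4_def)
  have "Lmut c d = twist c (twist d d)"
    using g by (simp add: Lmut_eq_twist exc_gram4_def twist_self)
  moreover have "chi (Lmut c d) b = 0" "chi (Lmut b (Lmut c d)) a = 0"
    using g by (simp_all add: exc_gram4_def Lmut_def chi_bilinear)
  ultimately have "Lmut a (Lmut b (Lmut c d)) = twist a (twist b (twist c (twist d d)))"
    by (simp add: Lmut_eq_twist)
  then have serre: "Lmut a (Lmut b (Lmut c d)) = serre_op d"
    by (simp add: twists_eq_serre_op[OF ex])
  have "mut_step [a, b, c, d] [a, b, Lmut c d, c]"
    "mut_step [a, b, Lmut c d, c] [a, Lmut b (Lmut c d), b, c]"
    "mut_step [a, Lmut b (Lmut c d), b, c] [Lmut a (Lmut b (Lmut c d)), a, b, c]"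
    by (simp_all add: mut_step_4_iff)
  then show rot: "mut_step\<^sup>*\<^sup>* [a, b, c, d] [serre_op d, a, b, c]"
    unfolding serre by (meson rtranclp.rtrancl_into_rtrancl rtranclp.rtrancl_refl)
  show "exc4 (serre_op d) a b c"
    using mut_steps_exceptional[OF rot] ex by (simp add: exceptional_basis_4_iff)
qed

section \<open>The (rank, degree) plane\<close>

text \<open>Integer 2\<times>2 matrices, written as \<open>(m\<^sub>1\<^sub>1, m\<^sub>1\<^sub>2, m\<^sub>2\<^sub>1, m\<^sub>2\<^sub>2)\<close>.\<close>

type_synonym mat2 = "int \<times> int \<times> int \<times> int"

fun mat2_mult :: "mat2 \<Rightarrow> mat2 \<Rightarrow> mat2" where
  "mat2_mult (a, b, c, d) (e, f, g, h) = (a*e + b*g, a*f + b*h, c*e + d*g, c*f + d*h)"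

fun mat2_apply :: "mat2 \<Rightarrow> int \<times> int \<Rightarrow> int \<times> int" where
  "mat2_apply (a, b, c, d) (x, y) = (a*x + b*y, c*x + d*y)"

fun trace2 :: "mat2 \<Rightarrow> int" where
  "trace2 (a, b, c, d) = a + d"

definition mat2_one :: mat2 where
  "mat2_one = (1, 0, 0, 1)"

lemma mat2_mult_assoc: "mat2_mult (mat2_mult x y) z = mat2_mult x (mat2_mult y z)"
  by (cases x; cases y; cases z) (simp add: algebra_simps)

lemma mat2_mult_one: "mat2_mult mat2_one x = x" "mat2_mult x mat2_one = x"
  by (cases x, simp add: mat2_one_def)+

lemma mat2_apply_mult: "mat2_apply (mat2_mult x y) v = mat2_apply x (mat2_apply y v)"
  by (cases x; cases y; cases v) (simp add: algebra_simps)

lemma mat2_eqI: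
  assumes "mat2_apply x (1, 0) = mat2_apply y (1, 0)" "mat2_apply x (0, 1) = mat2_apply y (0, 1)"
  shows "x = y"
  using assms by (cases x; cases y) simp

lemma mat2_mult_cancel_right2:
  assumes "mat2_mult a (mat2_mult b (mat2_mult c d)) = t"
    and "mat2_mult c c' = mat2_one" "mat2_mult d d' = mat2_one"
  shows "mat2_mult a b = mat2_mult (mat2_mult t d') c'"
  by (simp add: assms(1)[symmetric] mat2_mult_assoc assms(2,3) mat2_mult_one)

definition rk_deg :: "K0 \<Rightarrow> int \<times> int" where
  "rk_deg v = (rk v, deg v)"

definition twist_mat :: "int \<Rightarrow> int \<Rightarrow> mat2" where
  "twist_mat r s = (1 + 2 * r * s, -2 * r * r, 2 * s * s, 1 - 2 * r * s)"

definition twist_mat_inv :: "int \<Rightarrow> int \<Rightarrow> mat2" where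
  "twist_mat_inv r s = (1 - 2 * r * s, 2 * r * r, -2 * s * s, 1 + 2 * r * s)"

definition serre_mat :: mat2 where
  "serre_mat = (1, 0, -4, 1)"

lemma twist_mat_inv: "mat2_mult (twist_mat r s) (twist_mat_inv r s) = mat2_one"
  by (simp add: twist_mat_def twist_mat_inv_def mat2_one_def algebra_simps)

lemma rk_deg_twist: "rk_deg (twist e y) = mat2_apply (twist_mat (rk e) (deg e)) (rk_deg y)"
proof -
  have h: "chi e y = chi y e + 2 * cross e y"
    using chi_antisym[of e y] by simp
  show ?thesis
    by (simp add: h rk_deg_def twist_def twist_mat_def rk_linear deg_linear cross_def algebra_simps)
qed

lemma rk_serre_op: "rk (serre_op x) = rk x"
  by (simp add: serre_op_def rk_def)

lemma deg_serre_op: "deg (serre_op x) = deg x - 4 * rk x"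
  by (simp add: serre_op_def rk_def deg_def)

lemma rk_deg_serre_op: "rk_deg (serre_op x) = mat2_apply serre_mat (rk_deg x)"
  by (simp add: rk_deg_def rk_serre_op deg_serre_op serre_mat_def)

lemma twist_mats_product:
  assumes ex: "exc4 a b c d"
  shows "mat2_mult (twist_mat (rk a) (deg a)) (mat2_mult (twist_mat (rk b) (deg b))
           (mat2_mult (twist_mat (rk c) (deg c)) (twist_mat (rk d) (deg d)))) = serre_mat"
    (is "?M = _")
proof -
  have "mat2_apply ?M (rk_deg x) = rk_deg (twist a (twist b (twist c (twist d x))))" for x
    by (simp add: mat2_apply_mult rk_deg_twist)
  then have "mat2_apply ?M (rk_deg x) = mat2_apply serre_mat (rk_deg x)" for x
    by (simp add: twists_eq_serre_op[OF ex] rk_deg_serre_op)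
  moreover have "rk_deg (vec4 1 0 0 0) = (1, 0)" "rk_deg (vec4 (-1) 1 0 0) = (0, 1)"
    by (simp_all add: rk_deg_def rk_def deg_def)
  ultimately show ?thesis
    by (metis mat2_eqI)
qed

lemma twist_mats_relation:
  assumes "exc4 a b c d"
  shows "mat2_mult (twist_mat (rk a) (deg a)) (twist_mat (rk b) (deg b)) =
    mat2_mult (mat2_mult serre_mat (twist_mat_inv (rk d) (deg d))) (twist_mat_inv (rk c) (deg c))"
  using twist_mats_product[OF assms] by (rule mat2_mult_cancel_right2) (rule twist_mat_inv)+

text \<open>Trace identity for the (rank, degree) matrices of two adjacent twists: it constrains the
  determinant \<open>x\<close> of one pair by the determinant \<open>d\<close> and the ranks \<open>p\<close>, \<open>q\<close> of the
  opposite pair.\<close>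

definition markov_rel :: "int \<Rightarrow> int \<Rightarrow> int \<Rightarrow> int \<Rightarrow> bool" where
  "markov_rel x d p q \<longleftrightarrow> x * x = d * d + 2 * p * p + 2 * q * q - 4 * d * p * q"

lemma cross_serre_op: "cross (serre_op u) (serre_op v) = cross u v"
  by (simp add: cross_def rk_serre_op deg_serre_op algebra_simps)

lemma cross_serre_op_left: "cross (serre_op d) a = 4 * rk a * rk d - cross a d"
  by (simp add: cross_def rk_serre_op deg_serre_op algebra_simps)

lemma markov_rel_cross:
  assumes "exc4 a b c d"
  shows "markov_rel (cross a b) (cross c d) (rk c) (rk d)"
proof -
  have "trace2 (mat2_mult (twist_mat (rk a) (deg a)) (twist_mat (rk b) (deg b))) =
    trace2 (mat2_mult (mat2_mult serre_mat (twist_mat_inv (rk d) (deg d))) (twist_mat_inv (rk c) (deg c)))"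
    using twist_mats_relation[OF assms] by simp
  then show ?thesis
    by (simp add: markov_rel_def twist_mat_def twist_mat_inv_def serre_mat_def cross_def algebra_simps)
qed

lemma markov_rels:
  assumes ex: "exc4 a b c d"
  shows "markov_rel (cross c d) (cross a b) (rk a) (rk b)"
    and "markov_rel (cross (serre_op d) a) (cross b c) (rk b) (rk c)"
    and "markov_rel (cross a b) (cross c d) (rk c) (rk d)"
    and "markov_rel (cross b c) (cross (serre_op d) a) (rk d) (rk a)"
proof -
  have rot1: "exc4 (serre_op d) a b c"
    using mut_steps_rotate(2)[OF ex] .
  have rot2: "exc4 (serre_op c) (serre_op d) a b"
    using mut_steps_rotate(2)[OF rot1] .
  have rot3: "exc4 (serre_op b) (serre_op c) (serre_op d) a"
    using mut_steps_rotate(2)[OF rot2] .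
  show "markov_rel (cross c d) (cross a b) (rk a) (rk b)"
    using markov_rel_cross[OF rot2] by (simp add: cross_serre_op)
  show "markov_rel (cross (serre_op d) a) (cross b c) (rk b) (rk c)"
    using markov_rel_cross[OF rot1] .
  show "markov_rel (cross a b) (cross c d) (rk c) (rk d)"
    using markov_rel_cross[OF ex] .
  show "markov_rel (cross b c) (cross (serre_op d) a) (rk d) (rk a)"
    using markov_rel_cross[OF rot3] by (simp add: cross_serre_op rk_serre_op)
qed

lemma cross_cycle_sum:
  "rk c * rk d * cross a b + rk d * rk a * cross b c + rk a * rk b * cross c d
     + rk b * rk c * cross (serre_op d) a = 4 * (rk a * rk b * rk c * rk d)"
  by (simp add: cross_def rk_serre_op deg_serre_op algebra_simps)

section \<open>Arithmetic of the Markov-type relations\<close>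

lemma one_le_mult_int: "1 \<le> p \<Longrightarrow> 1 \<le> q \<Longrightarrow> 1 \<le> p * (q::int)"
  using mult_mono[of 1 p 1 q] by simp

lemma sum_squares_le_twice_product:
  fixes p q :: int
  assumes "1 \<le> p" "1 \<le> q"
  shows "p * p + q * q \<le> 2 * (p * p) * (q * q)"
    and "p * p + q * q = 2 * (p * p) * (q * q) \<longleftrightarrow> p = 1 \<and> q = 1"
proof -
  have p1: "1 \<le> p * p" and q1: "1 \<le> q * q"
    using assms one_le_mult_int by auto
  have a: "0 \<le> (p * p) * (q * q - 1)" and b: "0 \<le> (q * q) * (p * p - 1)"
    using p1 q1 by simp_all
  have sum: "(p * p) * (q * q - 1) + (q * q) * (p * p - 1) = 2 * (p * p) * (q * q) - (p * p + q * q)"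
    by (simp add: algebra_simps)
  then show "p * p + q * q \<le> 2 * (p * p) * (q * q)"
    using a b by linarith
  show "p * p + q * q = 2 * (p * p) * (q * q) \<longleftrightarrow> p = 1 \<and> q = 1"
  proof
    assume "p * p + q * q = 2 * (p * p) * (q * q)"
    then have "(p * p) * (q * q - 1) = 0" "(q * q) * (p * p - 1) = 0"
      using a b sum by linarith+
    then have "q * q = 1" "p * p = 1"
      using p1 q1 by auto
    moreover have "p \<le> p * p" "q \<le> q * q"
      using assms mult_left_mono[of 1 p p] mult_left_mono[of 1 q q] by simp_all
    ultimately show "p = 1 \<and> q = 1"
      using assms by simp
  qed simp
qed

lemma markov_opposite_sum_bounds:
  fixes p q p' q' u v :: int
  assumes pos: "1 \<le> p" "1 \<le> q" "1 \<le> p'" "1 \<le> q'"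
    and u: "3 * p * q \<le> u" and v: "v \<le> 0"
    and rel_v: "markov_rel v u p q" and rel_u: "markov_rel u v p' q'"
  shows "2 * p * q \<le> u + v" and "u + v \<le> 2 * p' * q'"
    and "u + v = 2 * p * q \<Longrightarrow> p = 1 \<and> q = 1"
    and "u + v = 2 * p' * q' \<Longrightarrow> p' = 1 \<and> q' = 1"
proof -
  define K K' where "K = 4 * (p * q) * (p * q) - 2 * (p * p) - 2 * (q * q)"
    and "K' = 4 * (p' * q') * (p' * q') - 2 * (p' * p') - 2 * (q' * q')"
  have K: "0 \<le> K" "K = 0 \<longleftrightarrow> p = 1 \<and> q = 1"
    using sum_squares_le_twice_product[OF pos(1,2)] by (auto simp: K_def algebra_simps)
  have K': "0 \<le> K'" "K' = 0 \<longleftrightarrow> p' = 1 \<and> q' = 1"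
    using sum_squares_le_twice_product[OF pos(3,4)] by (auto simp: K'_def algebra_simps)
  have v2: "(- v)\<^sup>2 = (u - 2 * p * q)\<^sup>2 - K" and u2: "u\<^sup>2 = (2 * p' * q' - v)\<^sup>2 - K'"
    using rel_v rel_u by (simp_all add: markov_rel_def K_def K'_def power2_eq_square algebra_simps)
  have "0 \<le> u - 2 * p * q" "0 \<le> 2 * p' * q' - v"
    using u v pos one_le_mult_int[of p q] one_le_mult_int[of p' q'] by (simp_all add: algebra_simps)
  then show "2 * p * q \<le> u + v" "u + v \<le> 2 * p' * q'"
    using power2_le_imp_le[of "- v" "u - 2 * p * q"] power2_le_imp_le[of u "2 * p' * q' - v"]
      v2 u2 K(1) K'(1) by linarith+
  show "p = 1 \<and> q = 1" if "u + v = 2 * p * q"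
  proof -
    have "u - 2 * p * q = - v"
      using that by simp
    then show ?thesis
      using v2 K(2) by simp
  qed
  show "p' = 1 \<and> q' = 1" if "u + v = 2 * p' * q'"
  proof -
    have "2 * p' * q' - v = u"
      using that by simp
    then show ?thesis
      using u2 K'(2) by simp
  qed
qed

lemma markov_large_small_weighted_sum:
  fixes p q p' q' u v :: int
  assumes pos: "1 \<le> p" "1 \<le> q" "1 \<le> p'" "1 \<le> q'"
    and u: "3 * p * q \<le> u" and v: "v \<le> 0"
    and rel_v: "markov_rel v u p q" and rel_u: "markov_rel u v p' q'"
    and nontriv: "\<not> (p = 1 \<and> q = 1 \<and> p' = 1 \<and> q' = 1)"
  shows "2 * (p * q * (p' * q')) < p' * q' * u + p * q * v"
proof -
  define A B where "A = p * q" and "B = p' * q'"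
  note bounds = markov_opposite_sum_bounds[OF pos u v rel_v rel_u]
  have A1: "1 \<le> A" and uA: "A \<le> u - 2 * A" and sum: "0 \<le> u + v - 2 * A" and AB: "A \<le> B"
    using bounds(1,2) u pos one_le_mult_int[of p q] by (simp_all add: A_def B_def algebra_simps)
  have "A < B \<or> 0 < u + v - 2 * A"
    using bounds(3,4) nontriv AB sum by (force simp: A_def B_def algebra_simps)
  then have "0 < (B - A) * (u - 2 * A) \<or> 0 < A * (u + v - 2 * A)"
    using A1 uA by auto
  moreover have "0 \<le> (B - A) * (u - 2 * A)" "0 \<le> A * (u + v - 2 * A)"
    using A1 uA AB sum by simp_all
  moreover have "B * u + A * v - 2 * (A * B) = (B - A) * (u - 2 * A) + A * (u + v - 2 * A)"
    by (simp add: algebra_simps)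
  ultimately show ?thesis
    unfolding A_def B_def by linarith
qed

lemma markov_opposite_weighted_sum:
  fixes p q p' q' u v :: int
  assumes pos: "1 \<le> p" "1 \<le> q" "1 \<le> p'" "1 \<le> q'"
    and rel_v: "markov_rel v u p q" and rel_u: "markov_rel u v p' q'"
    and large: "(3 * p * q \<le> u \<and> v \<le> 0) \<or> (3 * p' * q' \<le> v \<and> u \<le> 0)"
    and nontriv: "\<not> (p = 1 \<and> q = 1 \<and> p' = 1 \<and> q' = 1)"
  shows "2 * (p * q * p' * q') < p' * q' * u + p * q * v"
  using large
proof
  assume "3 * p * q \<le> u \<and> v \<le> 0"
  then show ?thesis
    using markov_large_small_weighted_sum[OF pos _ _ rel_v rel_u nontriv] by (simp add: ac_simps)
next
  assume "3 * p' * q' \<le> v \<and> u \<le> 0"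
  then show ?thesis
    using markov_large_small_weighted_sum[OF pos(3,4,1,2) _ _ rel_u rel_v] nontriv by (auto simp: ac_simps)
qed

text \<open>Mutating a pair with ranks \<open>p\<close>, \<open>q\<close> and determinant \<open>d\<close> replaces \<open>q\<close> by
  \<open>q - 2 d p\<close> or \<open>p\<close> by \<open>p - 2 d q\<close> (see \<open>rk_Lmut\<close>, \<open>rk_Rmut\<close>); this lowers the
  absolute rank exactly in the following situation.\<close>

definition rank_reducing :: "int \<Rightarrow> int \<Rightarrow> int \<Rightarrow> bool" where
  "rank_reducing p q d \<longleftrightarrow> 0 < d \<and> ((p \<le> q \<and> d * p < q) \<or> (q \<le> p \<and> d * q < p))"

lemma markov_rel_nonneg: "markov_rel x d p q \<Longrightarrow> 0 \<le> d * d + 2 * p * p + 2 * q * q - 4 * d * p * q"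
  unfolding markov_rel_def by (metis zero_le_square)

lemma markov_rel_impossible_low:
  fixes p q d x :: int
  assumes p1: "1 \<le> p" and pq: "p < q" and nd: "q \<le> d * p" and low: "d \<le> 2 * p * q"
  shows "\<not> markov_rel x d p q"
proof
  assume rel: "markov_rel x d p q"
  have pp1: "1 \<le> p * p"
    using one_le_mult_int[OF p1 p1] .
  have "p * d \<le> p * (2 * p * q)"
    using low p1 by (intro mult_left_mono) auto
  moreover have "1 * q \<le> (p * p) * q"
    using pp1 pq p1 by (intro mult_right_mono) auto
  moreover have "p * (2 * p * q) = 2 * ((p * p) * q)" "4 * (p * p) * q = 4 * ((p * p) * q)"
    by (simp_all add: algebra_simps)
  ultimately have "p * d - 4 * (p * p) * q + q \<le> 0"
    using pq p1 by linarith
  moreover have "0 \<le> p * d - q"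
    using nd by (simp add: mult.commute)
  ultimately have "(p * d - q) * (p * d - 4 * (p * p) * q + q) \<le> 0"
    by (simp add: mult_nonneg_nonpos)
  moreover have "q * q - 2 * (p * p) * (q * q) + 2 * (p * p) * (p * p) < 0"
  proof -
    have "(p + 1) * (p + 1) * (2 * (p * p) - 1) \<le> q * q * (2 * (p * p) - 1)"
      using pq p1 pp1 by (intro mult_right_mono mult_mono) auto
    moreover have "(p + 1) * (p + 1) * (2 * (p * p) - 1) - 2 * (p * p) * (p * p)
        = 4 * (p * p * p) + p * p - 2 * p - 1"
      "q * q * (2 * (p * p) - 1) = 2 * (p * p) * (q * q) - q * q"
      by (simp_all add: algebra_simps)
    moreover have "p \<le> p * p * p"
      using p1 pp1 mult_mono[of 1 "p * p" p p] by simp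
    ultimately show ?thesis
      using p1 pp1 by linarith
  qed
  moreover have "0 \<le> (p * p) * (d * d + 2 * p * p + 2 * q * q - 4 * d * p * q)"
    using markov_rel_nonneg[OF rel] pp1 by simp
  moreover have "(p * p) * (d * d + 2 * p * p + 2 * q * q - 4 * d * p * q)
      = (p * d - q) * (p * d - 4 * (p * p) * q + q) + (q * q - 2 * (p * p) * (q * q) + 2 * (p * p) * (p * p))"
    by (simp add: algebra_simps)
  ultimately show False
    by linarith
qed

lemma markov_rel_impossible_mid:
  fixes p q d x :: int
  assumes p1: "1 \<le> p" and pq: "p < q" and mid: "2 * p * q < d" "d < 3 * p * q"
  shows "\<not> markov_rel x d p q"
proof
  assume rel: "markov_rel x d p q"
  have "(d - 2 * p * q) * (d - 2 * p * q) < (p * q) * (p * q)"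
    using mid by (intro mult_strict_mono) auto
  moreover have "2 * (p * p) + 2 * (q * q) \<le> 3 * ((p * q) * (p * q))"
  proof -
    have qq2: "2 \<le> q * q"
      using pq p1 mult_mono[of 2 q 2 q] by simp
    have "1 * (3 * (q * q) - 2) \<le> (p * p) * (3 * (q * q) - 2)"
      using one_le_mult_int[OF p1 p1] qq2 by (intro mult_right_mono) auto
    then show ?thesis
      using qq2 by (simp add: algebra_simps)
  qed
  moreover have "d * d + 2 * p * p + 2 * q * q - 4 * d * p * q
      = (d - 2 * p * q) * (d - 2 * p * q) - (4 * ((p * q) * (p * q)) - 2 * (p * p) - 2 * (q * q))"
    by (simp add: algebra_simps)
  ultimately show False
    using markov_rel_nonneg[OF rel] by linarith
qed

lemma markov_unequal_non_reducing:
  fixes p q d x :: int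
  assumes "1 \<le> p" "p < q" "q \<le> d * p" "markov_rel x d p q"
  shows "3 * p * q \<le> d"
  using markov_rel_impossible_low[of p q d x] markov_rel_impossible_mid[of p q d x] assms by force

lemma markov_equal_cases:
  fixes p d x :: int
  assumes p1: "1 \<le> p" and d0: "0 < d" and rel: "markov_rel x d p p"
  shows "d = 1 \<or> (p = 1 \<and> d = 2) \<or> 3 * p * p \<le> d"
proof (rule ccontr)
  assume nt: "\<not> ?thesis"
  have F: "x * x = 1 - (d - 1) * (4 * (p * p) - 1 - d)"
    using rel by (simp add: markov_rel_def algebra_simps)
  show False
  proof (cases "p = 1")
    case True
    then show False
      using nt d0 by auto
  next
    case False
    then have pp4: "4 \<le> p * p"
      using p1 mult_mono[of 2 p 2 p] by simp
    have "2 * 1 \<le> (d - 1) * (4 * (p * p) - 1 - d) \<or> d = 2"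
      using nt d0 pp4 by (intro disjCI mult_mono) (auto simp: algebra_simps)
    then have "2 \<le> (d - 1) * (4 * (p * p) - 1 - d)"
      using pp4 by auto
    then show False
      using F zero_le_square[of x] by linarith
  qed
qed

lemma markov_rel_swap: "markov_rel x d p q \<longleftrightarrow> markov_rel x d q p"
  by (simp add: markov_rel_def algebra_simps)

lemma markov_non_reducing_cases:
  fixes p q d x :: int
  assumes p1: "1 \<le> p" and q1: "1 \<le> q" and d0: "0 < d"
    and nd: "\<not> rank_reducing p q d" and rel: "markov_rel x d p q"
  shows "(p = q \<and> d = 1) \<or> (p = 1 \<and> q = 1 \<and> d = 2) \<or> 3 * p * q \<le> d"
proof -
  consider "p < q" | "q < p" | "p = q"
    by linarith
  then show ?thesis
  proof cases
    case 1
    then have "q \<le> d * p"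
      using nd d0 by (auto simp: rank_reducing_def)
    then show ?thesis
      using markov_unequal_non_reducing[OF p1 1 _ rel] by simp
  next
    case 2
    then have "p \<le> d * q"
      using nd d0 by (auto simp: rank_reducing_def)
    then show ?thesis
      using markov_unequal_non_reducing[OF q1 2 _ markov_rel_swap[THEN iffD1, OF rel]]
      by (simp add: algebra_simps)
  next
    case 3
    then show ?thesis
      using markov_equal_cases[OF p1 d0] rel by auto
  qed
qed

lemma markov_balanced:
  fixes p p' q' v :: int
  assumes pos: "1 \<le> p'" "1 \<le> q'" and rel: "markov_rel v 1 p p" "markov_rel 1 v p' q'"
  shows "p' = q' \<and> v = 1"
proof -
  have "v * v = 1"
    using rel(1) by (simp add: markov_rel_def algebra_simps)
  moreover have sum: "2 * (p' * q') * v = p' * p' + q' * q'"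
    using rel(2) \<open>v * v = 1\<close> by (simp add: markov_rel_def algebra_simps)
  moreover have "0 < v"
  proof -
    have "1 \<le> p' * p'" "1 \<le> q' * q'" "1 \<le> p' * q'"
      using pos one_le_mult_int by auto
    then show ?thesis
      using sum by (smt (verit) zero_less_mult_iff)
  qed
  ultimately have "v = 1"
    by (auto simp: square_eq_1_iff)
  then have "(p' - q') * (p' - q') = 0"
    using sum by (simp add: algebra_simps)
  with \<open>v = 1\<close> show ?thesis
    by simp
qed

lemma markov_opposite_cases:
  fixes p q p' q' u v :: int
  assumes pos: "1 \<le> p" "1 \<le> q" "1 \<le> p'" "1 \<le> q'"
    and rel_v: "markov_rel v u p q" and rel_u: "markov_rel u v p' q'"
    and u: "u \<le> 0 \<or> (p = q \<and> u = 1) \<or> 3 * p * q \<le> u"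
    and v: "v \<le> 0 \<or> (p' = q' \<and> v = 1) \<or> 3 * p' * q' \<le> v"
  shows "(p = q \<and> u = 1 \<and> p' = q' \<and> v = 1) \<or> (3 * p * q \<le> u \<and> v \<le> 0) \<or> (3 * p' * q' \<le> v \<and> u \<le> 0)"
proof -
  have sum: "2 * (p * q) * u + 2 * (p' * q') * v = p * p + q * q + p' * p' + q' * q'"
    using rel_v rel_u by (simp add: markov_rel_def algebra_simps)
  have sq: "1 \<le> p * p" "1 \<le> q * q" "1 \<le> p' * p'" "1 \<le> q' * q'"
    and pq: "1 \<le> p * q" "1 \<le> p' * q'"
    using pos one_le_mult_int by auto
  have not_both_nonpos: "\<not> (u \<le> 0 \<and> v \<le> 0)"
  proof
    assume "u \<le> 0 \<and> v \<le> 0"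
    then have "2 * (p * q) * u \<le> 0" "2 * (p' * q') * v \<le> 0"
      using pq by (simp_all add: mult_nonneg_nonpos)
    then show False
      using sum sq by linarith
  qed
  have not_both_large: "\<not> (3 * p * q \<le> u \<and> 3 * p' * q' \<le> v)"
  proof
    assume h: "3 * p * q \<le> u \<and> 3 * p' * q' \<le> v"
    have "2 * (p * q) * (3 * p * q) \<le> 2 * (p * q) * u"
      using h pq by (intro mult_left_mono) auto
    moreover have "2 * (p' * q') * (3 * p' * q') \<le> 2 * (p' * q') * v"
      using h pq by (intro mult_left_mono) auto
    moreover have "2 * (p * q) * (3 * p * q) = 3 * (2 * (p * p) * (q * q))"
      "2 * (p' * q') * (3 * p' * q') = 3 * (2 * (p' * p') * (q' * q'))"
      by (simp_all add: algebra_simps)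
    ultimately show False
      using sum sq sum_squares_le_twice_product(1)[OF pos(1,2)] sum_squares_le_twice_product(1)[OF pos(3,4)]
      by linarith
  qed
  have "p' = q' \<and> v = 1" if "p = q" "u = 1"
    using markov_balanced[OF pos(3,4)] rel_v rel_u that by simp
  moreover have "p = q \<and> u = 1" if "p' = q'" "v = 1"
    using markov_balanced[OF pos(1,2)] rel_v rel_u that by simp
  ultimately show ?thesis
    using u v not_both_nonpos not_both_large by auto
qed

lemma markov_trichotomy:
  fixes p q d x p' q' :: int
  assumes pos: "1 \<le> p" "1 \<le> q" "1 \<le> p'" "1 \<le> q'"
    and nd: "\<not> rank_reducing p q d"
    and rel_x: "markov_rel x d p q" and rel_d: "markov_rel d x p' q'"
    and nontriv: "\<not> (p = 1 \<and> q = 1 \<and> p' = 1 \<and> q' = 1)"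
  shows "d \<le> 0 \<or> (p = q \<and> d = 1) \<or> 3 * p * q \<le> d"
proof (cases "0 < d")
  case True
  moreover have "\<not> (p = 1 \<and> q = 1 \<and> d = 2)"
  proof
    assume h: "p = 1 \<and> q = 1 \<and> d = 2"
    then have "x = 0"
      using rel_x by (simp add: markov_rel_def)
    then have "p' * p' + q' * q' = 2"
      using rel_d h by (simp add: markov_rel_def)
    moreover have "1 \<le> p' * p'" "1 \<le> q' * q'" "p' \<le> p' * p'" "q' \<le> q' * q'"
      using pos one_le_mult_int mult_left_mono[of 1 p' p'] mult_left_mono[of 1 q' q'] by auto
    ultimately have "p' = 1" "q' = 1"
      using pos by linarith+
    then show False
      using nontriv h by simp
  qed
  ultimately show ?thesis
    using markov_non_reducing_cases[OF pos(1,2) _ nd rel_x] by blast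
qed simp

lemma markov_balanced_large_impossible:
  fixes p s u v :: int
  assumes pos: "1 \<le> p" "1 \<le> s" and nontriv: "\<not> (p = 1 \<and> s = 1)"
    and rel_v: "markov_rel v u p s" and rel_u: "markov_rel u v s p"
    and large: "(3 * p * s \<le> u \<and> v \<le> 0) \<or> (3 * s * p \<le> v \<and> u \<le> 0)"
  shows False
proof -
  have "u + v = 2 * p * s"
    using large
  proof
    assume "3 * p * s \<le> u \<and> v \<le> 0"
    then show ?thesis
      using markov_opposite_sum_bounds(1,2)[OF pos pos(2,1) _ _ rel_v rel_u] by (simp add: algebra_simps)
  next
    assume "3 * s * p \<le> v \<and> u \<le> 0"
    then show ?thesis
      using markov_opposite_sum_bounds(1,2)[OF pos(2,1) pos _ _ rel_u rel_v] by (simp add: algebra_simps)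
  qed
  moreover have "2 * (p * s) * (u + v) = 2 * (p * p + s * s)"
    using rel_v rel_u by (simp add: markov_rel_def algebra_simps)
  ultimately have "p * p + s * s = 2 * (p * p) * (s * s)"
    by (simp add: algebra_simps)
  then show False
    using sum_squares_le_twice_product(2)[OF pos] nontriv by blast
qed

lemma markov_cycle_opposite_cases_impossible:
  fixes r1 r2 r3 r4 d1 d2 d3 d4 :: int
  assumes pos: "1 \<le> r1" "1 \<le> r2" "1 \<le> r3" "1 \<le> r4"
    and rel1: "markov_rel d3 d1 r1 r2" and rel2: "markov_rel d4 d2 r2 r3"
    and rel3: "markov_rel d1 d3 r3 r4" and rel4: "markov_rel d2 d4 r4 r1"
    and cycle: "r3 * r4 * d1 + r4 * r1 * d2 + r1 * r2 * d3 + r2 * r3 * d4 = 4 * (r1 * r2 * r3 * r4)"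
    and nontriv: "\<not> (r1 = 1 \<and> r2 = 1 \<and> r3 = 1 \<and> r4 = 1)"
    and o13: "(r1 = r2 \<and> d1 = 1 \<and> r3 = r4 \<and> d3 = 1) \<or> (3 * r1 * r2 \<le> d1 \<and> d3 \<le> 0) \<or> (3 * r3 * r4 \<le> d3 \<and> d1 \<le> 0)"
    and o24: "(r2 = r3 \<and> d2 = 1 \<and> r4 = r1 \<and> d4 = 1) \<or> (3 * r2 * r3 \<le> d2 \<and> d4 \<le> 0) \<or> (3 * r4 * r1 \<le> d4 \<and> d2 \<le> 0)"
  shows False
proof (cases "r1 = r2 \<and> d1 = 1 \<and> r3 = r4 \<and> d3 = 1")
  case bal13: True
  then have o24': "(r2 = r4 \<and> d2 = 1 \<and> d4 = 1) \<or> (3 * r2 * r4 \<le> d2 \<and> d4 \<le> 0) \<or> (3 * r4 * r2 \<le> d4 \<and> d2 \<le> 0)"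
    using o24 by auto
  show False
  proof (cases "r2 = r4 \<and> d2 = 1 \<and> d4 = 1")
    case True
    have "r2 * r2 = r2 * r2 * (r2 * r2)"
      using cycle bal13 True by (simp add: algebra_simps)
    then have "r2 * r2 = 1"
      using pos(2) by (simp add: mult_cancel_left1)
    then show False
      using pos(2) nontriv bal13 True by (simp add: square_eq_1_iff)
  next
    case False
    then show False
      using markov_balanced_large_impossible[OF pos(2,4), of d4 d2] o24' rel2 rel4 nontriv bal13 by auto
  qed
next
  case False
  then have large13: "(3 * r1 * r2 \<le> d1 \<and> d3 \<le> 0) \<or> (3 * r3 * r4 \<le> d3 \<and> d1 \<le> 0)"
    using o13 by blast
  show False
  proof (cases "r2 = r3 \<and> d2 = 1 \<and> r4 = r1 \<and> d4 = 1")
    case True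
    then have "(3 * r3 * r1 \<le> d3 \<and> d1 \<le> 0) \<or> (3 * r1 * r3 \<le> d1 \<and> d3 \<le> 0)"
      using large13 by (auto simp: mult.commute)
    then show False
      using markov_balanced_large_impossible[OF pos(3,1), of d1 d3] rel1 rel3 nontriv True by auto
  next
    case False
    then have "2 * (r2 * r3 * r4 * r1) < r4 * r1 * d2 + r2 * r3 * d4"
      using o24 markov_opposite_weighted_sum[OF pos(2,3,4,1) rel2 rel4] nontriv by auto
    moreover have "2 * (r1 * r2 * r3 * r4) < r3 * r4 * d1 + r1 * r2 * d3"
      using large13 markov_opposite_weighted_sum[OF pos(1,2,3,4) rel1 rel3] nontriv by auto
    ultimately show False
      using cycle by (simp add: ac_simps)
  qed
qed

lemma exists_rank_reducing:
  fixes r1 r2 r3 r4 d1 d2 d3 d4 :: int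
  assumes pos: "1 \<le> r1" "1 \<le> r2" "1 \<le> r3" "1 \<le> r4"
    and rel1: "markov_rel d3 d1 r1 r2" and rel2: "markov_rel d4 d2 r2 r3"
    and rel3: "markov_rel d1 d3 r3 r4" and rel4: "markov_rel d2 d4 r4 r1"
    and cycle: "r3 * r4 * d1 + r4 * r1 * d2 + r1 * r2 * d3 + r2 * r3 * d4 = 4 * (r1 * r2 * r3 * r4)"
    and nontriv: "\<not> (r1 = 1 \<and> r2 = 1 \<and> r3 = 1 \<and> r4 = 1)"
  shows "rank_reducing r1 r2 d1 \<or> rank_reducing r2 r3 d2 \<or> rank_reducing r3 r4 d3 \<or> rank_reducing r4 r1 d4"
proof (rule ccontr)
  assume nd: "\<not> ?thesis"
  have t1: "d1 \<le> 0 \<or> (r1 = r2 \<and> d1 = 1) \<or> 3 * r1 * r2 \<le> d1"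
    using markov_trichotomy[OF pos(1,2,3,4) _ rel1 rel3] nd nontriv by blast
  have t2: "d2 \<le> 0 \<or> (r2 = r3 \<and> d2 = 1) \<or> 3 * r2 * r3 \<le> d2"
    using markov_trichotomy[OF pos(2,3,4,1) _ rel2 rel4] nd nontriv by blast
  have t3: "d3 \<le> 0 \<or> (r3 = r4 \<and> d3 = 1) \<or> 3 * r3 * r4 \<le> d3"
    using markov_trichotomy[OF pos(3,4,1,2) _ rel3 rel1] nd nontriv by blast
  have t4: "d4 \<le> 0 \<or> (r4 = r1 \<and> d4 = 1) \<or> 3 * r4 * r1 \<le> d4"
    using markov_trichotomy[OF pos(4,1,2,3) _ rel4 rel2] nd nontriv by blast
  show False
    using markov_cycle_opposite_cases_impossible[OF pos rel1 rel2 rel3 rel4 cycle nontriv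
        markov_opposite_cases[OF pos(1,2,3,4) rel1 rel3 t1 t3]
        markov_opposite_cases[OF pos(2,3,4,1) rel2 rel4 t2 t4]] .
qed

section \<open>Descent to a standard basis\<close>

definition rank_sum :: "K0 list \<Rightarrow> int" where
  "rank_sum es = (\<Sum>v\<leftarrow>es. \<bar>rk v\<bar>)"

lemma rank_sum_update:
  "k < length es \<Longrightarrow> rank_sum (es[k := x]) = rank_sum es - \<bar>rk (es!k)\<bar> + \<bar>rk x\<bar>"
  by (induction es arbitrary: k) (auto simp: rank_sum_def split: nat.split)

lemma rk_Lmut: "chi v e = 0 \<Longrightarrow> rk (Lmut e v) = rk v - 2 * (cross e v * rk e)"
  by (simp add: Lmut_def rk_linear chi_eq_two_cross)

lemma rk_Rmut: "chi e v = 0 \<Longrightarrow> rk (Rmut e v) = rk v - 2 * (cross v e * rk e)"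
  by (simp add: Rmut_def rk_linear chi_eq_two_cross)

lemma rank_reducing_mutation:
  assumes orth: "chi y x = 0" and pos: "0 < rk x" "0 < rk y"
    and red: "rank_reducing (rk x) (rk y) (cross x y)"
  shows "\<bar>rk (Lmut x y)\<bar> < rk y \<or> \<bar>rk (Rmut y x)\<bar> < rk x"
proof -
  have "0 < cross x y * rk x" "0 < cross x y * rk y"
    using red pos by (simp_all add: rank_reducing_def)
  then show ?thesis
    using red rk_Lmut[OF orth] rk_Rmut[OF orth] by (auto simp: rank_reducing_def mult.commute)
qed

lemma mut_step_reducing_rank_sum:
  assumes ex: "exceptional_basis es" and i: "Suc i < length es"
    and pos: "0 < rk (es!i)" "0 < rk (es!Suc i)"
    and red: "rank_reducing (rk (es!i)) (rk (es!Suc i)) (cross (es!i) (es!Suc i))"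
  shows "\<exists>fs. mut_step es fs \<and> rank_sum fs < rank_sum es"
proof -
  have "chi (es!Suc i) (es!i) = 0"
    using ex i by (auto simp: exceptional_basis_def)
  then consider "\<bar>rk (Lmut (es!i) (es!Suc i))\<bar> < rk (es!Suc i)"
    | "\<bar>rk (Rmut (es!Suc i) (es!i))\<bar> < rk (es!i)"
    using rank_reducing_mutation pos red by blast
  then show ?thesis
  proof cases
    case 1
    then have "rank_sum (Lmut_at i es) < rank_sum es"
      using i pos by (simp add: Lmut_at_def rank_sum_update)
    moreover have "mut_step es (Lmut_at i es)"
      using i by (auto simp: mut_step_def)
    ultimately show ?thesis
      by blast
  next
    case 2
    then have "rank_sum (Rmut_at i es) < rank_sum es"
      using i pos by (simp add: Rmut_at_def rank_sum_update)
    moreover have "mut_step es (Rmut_at i es)"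
      using i by (auto simp: mut_step_def)
    ultimately show ?thesis
      by blast
  qed
qed

lemma mut_steps_reducing_rank_sum:
  assumes ex: "exc4 a b c d" and pos: "0 < rk a" "0 < rk b" "0 < rk c" "0 < rk d"
    and nontriv: "\<not> (rk a = 1 \<and> rk b = 1 \<and> rk c = 1 \<and> rk d = 1)"
  shows "\<exists>fs. mut_step\<^sup>*\<^sup>* [a, b, c, d] fs \<and> rank_sum fs < rank_sum [a, b, c, d]"
proof -
  have exb: "exceptional_basis [a, b, c, d]"
    using ex by (simp add: exceptional_basis_4_iff)
  have "rank_reducing (rk a) (rk b) (cross a b) \<or> rank_reducing (rk b) (rk c) (cross b c)
      \<or> rank_reducing (rk c) (rk d) (cross c d) \<or> rank_reducing (rk d) (rk a) (cross (serre_op d) a)"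
    by (rule exists_rank_reducing) (use pos markov_rels[OF ex] cross_cycle_sum nontriv in auto)
  then consider (i) i where "i < 3" "rank_reducing (rk ([a, b, c, d]!i)) (rk ([a, b, c, d]!Suc i))
        (cross ([a, b, c, d]!i) ([a, b, c, d]!Suc i))"
    | (rotated) "rank_reducing (rk (serre_op d)) (rk a) (cross (serre_op d) a)"
    by (metis rk_serre_op nth_Cons_0 nth_Cons_Suc numeral_3_eq_3 less_Suc_eq)
  then show ?thesis
  proof cases
    case i
    then have "Suc i < length [a, b, c, d]" "0 < rk ([a, b, c, d]!i)" "0 < rk ([a, b, c, d]!Suc i)"
      using pos by (auto simp: numeral_eq_Suc less_Suc_eq)
    then obtain fs where "mut_step [a, b, c, d] fs" "rank_sum fs < rank_sum [a, b, c, d]"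
      using mut_step_reducing_rank_sum[OF exb _ _ _ i(2)] by blast
    then show ?thesis
      by blast
  next
    case rotated
    have rot: "mut_step\<^sup>*\<^sup>* [a, b, c, d] [serre_op d, a, b, c]"
      using mut_steps_rotate(1)[OF ex] .
    then have "exceptional_basis [serre_op d, a, b, c]"
      using mut_steps_exceptional exb by blast
    then have "\<exists>fs. mut_step [serre_op d, a, b, c] fs \<and> rank_sum fs < rank_sum [serre_op d, a, b, c]"
      by (rule mut_step_reducing_rank_sum[where i = 0]) (use rotated pos in \<open>simp_all add: rk_serre_op\<close>)
    then obtain fs where "mut_step [serre_op d, a, b, c] fs" "rank_sum fs < rank_sum [serre_op d, a, b, c]"
      by blast
    moreover have "rank_sum [serre_op d, a, b, c] = rank_sum [a, b, c, d]"
      by (simp add: rank_sum_def rk_serre_op)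
    ultimately show ?thesis
      using rot by (metis rtranclp.rtrancl_into_rtrancl)
  qed
qed

definition sign_normalize :: "K0 \<Rightarrow> K0" where
  "sign_normalize v = (if 0 < rk v then v else - v)"

lemma rk_sign_normalize: "rk (sign_normalize v) = \<bar>rk v\<bar>"
  by (simp add: sign_normalize_def rk_linear)

lemma mut_steps_sign_normalize:
  "mut_step\<^sup>*\<^sup>* [a, b, c, d] [sign_normalize a, sign_normalize b, sign_normalize c, sign_normalize d]"
proof -
  have "mut_step\<^sup>*\<^sup>* [a, b, c, d] [sign_normalize a, b, c, d]"
    "mut_step\<^sup>*\<^sup>* [sign_normalize a, b, c, d] [sign_normalize a, sign_normalize b, c, d]"
    "mut_step\<^sup>*\<^sup>* [sign_normalize a, sign_normalize b, c, d]
       [sign_normalize a, sign_normalize b, sign_normalize c, d]"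
    "mut_step\<^sup>*\<^sup>* [sign_normalize a, sign_normalize b, sign_normalize c, d]
       [sign_normalize a, sign_normalize b, sign_normalize c, sign_normalize d]"
    by (auto simp: sign_normalize_def mut_step_4_iff)
  then show ?thesis
    by (meson rtranclp_trans)
qed

lemma exc4_rk_nonzero:
  assumes "exc4 a b c d" shows "rk a \<noteq> 0" "rk b \<noteq> 0" "rk c \<noteq> 0" "rk d \<noteq> 0"
  using assms odd_rk_if_chi_self_eq_1 by (fastforce simp: exc4_def exc_gram4_def)+

lemma mut_steps_rank_one:
  assumes "exceptional_basis es"
  shows "\<exists>a b c d. mut_step\<^sup>*\<^sup>* es [a, b, c, d] \<and> exc4 a b c d \<and> rk a = 1 \<and> rk b = 1 \<and> rk c = 1 \<and> rk d = 1"
  using assms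
proof (induction "nat (rank_sum es)" arbitrary: es rule: less_induct)
  case less
  obtain a b c d where es: "es = [a, b, c, d]" and ex: "exc4 a b c d"
    using less.prems by (rule exceptional_basis_4E)
  let ?n = sign_normalize
  have to_pos: "mut_step\<^sup>*\<^sup>* es [?n a, ?n b, ?n c, ?n d]"
    using mut_steps_sign_normalize es by simp
  have ex': "exc4 (?n a) (?n b) (?n c) (?n d)"
    using mut_steps_exceptional[OF to_pos less.prems] by (simp add: exceptional_basis_4_iff)
  have pos: "0 < rk (?n a)" "0 < rk (?n b)" "0 < rk (?n c)" "0 < rk (?n d)"
    using exc4_rk_nonzero[OF ex] by (simp_all add: rk_sign_normalize)
  have same_sum: "rank_sum [?n a, ?n b, ?n c, ?n d] = rank_sum es"
    using es by (simp add: rank_sum_def rk_sign_normalize)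
  show ?case
  proof (cases "rk (?n a) = 1 \<and> rk (?n b) = 1 \<and> rk (?n c) = 1 \<and> rk (?n d) = 1")
    case True
    then show ?thesis
      using to_pos ex' by blast
  next
    case False
    then obtain fs where steps: "mut_step\<^sup>*\<^sup>* [?n a, ?n b, ?n c, ?n d] fs"
      and smaller: "rank_sum fs < rank_sum [?n a, ?n b, ?n c, ?n d]"
      using mut_steps_reducing_rank_sum[OF ex' pos] by blast
    have "0 \<le> rank_sum fs"
      by (induction fs) (simp_all add: rank_sum_def)
    then have "nat (rank_sum fs) < nat (rank_sum es)"
      using smaller same_sum by simp
    moreover have es_fs: "mut_step\<^sup>*\<^sup>* es fs"
      using to_pos steps by (rule rtranclp_trans)
    moreover have "exceptional_basis fs"
      using mut_steps_exceptional[OF es_fs less.prems] .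
    ultimately show ?thesis
      using less.hyps by (meson rtranclp_trans)
  qed
qed

lemma cross_rank_one: "rk x = 1 \<Longrightarrow> rk y = 1 \<Longrightarrow> cross x y = deg y - deg x"
  by (simp add: cross_def)

lemma rank_one_cross_sum:
  assumes ex: "exc4 a b c d" and r: "rk a = 1" "rk b = 1" "rk c = 1" "rk d = 1"
  shows "cross a b + cross c d = 2"
  using markov_rels(1,3)[OF ex] r by (simp add: markov_rel_def algebra_simps)

lemma rank_one_cross_cases:
  assumes ex: "exc4 a b c d" and r: "rk a = 1" "rk b = 1" "rk c = 1" "rk d = 1"
  shows "cross a b = 1 \<or> cross b c = 1"
proof -
  define sa sb sc sd where "sa = deg a" and "sb = deg b" and "sc = deg c" and "sd = deg d"
  have rel: "mat2_mult (twist_mat 1 sa) (twist_mat 1 sb) =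
      mat2_mult (mat2_mult serre_mat (twist_mat_inv 1 sd)) (twist_mat_inv 1 sc)"
    using twist_mats_relation[OF ex] r by (simp add: sa_def sb_def sc_def sd_def)
  have e11: "(1 + 2 * sa) * (1 + 2 * sb) - 4 * sb * sb = (1 - 2 * sd) * (1 - 2 * sc) - 4 * sc * sc"
    using arg_cong[OF rel, of fst] by (simp add: twist_mat_def twist_mat_inv_def serre_mat_def algebra_simps)
  have e12: "- 2 * (1 + 2 * sa) - 2 * (1 - 2 * sb) = 2 * (1 - 2 * sd) + 2 * (1 + 2 * sc)"
    using arg_cong[OF rel, of "\<lambda>m. fst (snd m)"]
    by (simp add: twist_mat_def twist_mat_inv_def serre_mat_def algebra_simps)
  define X Y where "X = (1 + 2 * sa) * (1 + 2 * sb) - 4 * sb * sb - ((1 - 2 * sd) * (1 - 2 * sc) - 4 * sc * sc)"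
    and "Y = - 2 * (1 + 2 * sa) - 2 * (1 - 2 * sb) - (2 * (1 - 2 * sd) + 2 * (1 + 2 * sc))"
  have "X = 0" "Y = 0"
    using e11 e12 by (simp_all add: X_def Y_def)
  moreover have "8 * ((sb - sa - 1) * (sc - sb - 1)) = 2 * X - (1 - 2 * sc) * Y"
    by (simp add: X_def Y_def algebra_simps)
  ultimately have "(sb - sa - 1) * (sc - sb - 1) = 0"
    by simp
  then show ?thesis
    using r by (auto simp: cross_rank_one sa_def sb_def sc_def)
qed

text \<open>The Gram matrix of \<open>(\<O>, \<O>(1,0), \<O>(0,1), \<O>(1,1))\<close> above the diagonal.\<close>

definition std_gram4 :: "K0 \<Rightarrow> K0 \<Rightarrow> K0 \<Rightarrow> K0 \<Rightarrow> bool" where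
  "std_gram4 a b c d \<longleftrightarrow> chi a b = 2 \<and> chi a c = 2 \<and> chi a d = 4 \<and> chi b c = 0 \<and> chi b d = 2 \<and> chi c d = 2"

lemma rank_one_shift_steps:
  assumes ex: "exc4 a b c d" and r: "rk a = 1" "rk b = 1" and ab: "cross a b = 1"
  shows "mut_step\<^sup>*\<^sup>* [a, b, c, d] [b, - Rmut b a, c, d]" "rk (- Rmut b a) = 1"
      "deg (- Rmut b a) = 2 * deg b - deg a"
    and "mut_step\<^sup>*\<^sup>* [a, b, c, d] [- Lmut a b, a, c, d]" "rk (- Lmut a b) = 1"
      "deg (- Lmut a b) = 2 * deg a - deg b"
proof -
  have "chi a b = 2"
    using ex ab by (simp add: exc4_def exc_gram4_def chi_eq_two_cross)
  then show "rk (- Rmut b a) = 1" "deg (- Rmut b a) = 2 * deg b - deg a"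
    "rk (- Lmut a b) = 1" "deg (- Lmut a b) = 2 * deg a - deg b"
    using r by (simp_all add: Rmut_def Lmut_def rk_linear deg_linear)
  have "mut_step [a, b, c, d] [b, Rmut b a, c, d]" "mut_step [b, Rmut b a, c, d] [b, - Rmut b a, c, d]"
    "mut_step [a, b, c, d] [Lmut a b, a, c, d]" "mut_step [Lmut a b, a, c, d] [- Lmut a b, a, c, d]"
    by (simp_all add: mut_step_4_iff)
  then show "mut_step\<^sup>*\<^sup>* [a, b, c, d] [b, - Rmut b a, c, d]"
    "mut_step\<^sup>*\<^sup>* [a, b, c, d] [- Lmut a b, a, c, d]"
    by (meson rtranclp.rtrancl_into_rtrancl rtranclp.rtrancl_refl)+
qed

lemma mut_steps_std_gram_rank_one:
  assumes "exc4 a b c d" "rk a = 1" "rk b = 1" "rk c = 1" "rk d = 1" "cross a b = 1" "\<bar>cross b c\<bar> = int n"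
  shows "\<exists>a' b' c' d'. mut_step\<^sup>*\<^sup>* [a, b, c, d] [a', b', c', d'] \<and> exc4 a' b' c' d' \<and> std_gram4 a' b' c' d'"
  using assms
proof (induction n arbitrary: a b c d)
  case 0
  have "cross c d = 1"
    using rank_one_cross_sum[OF "0.prems"(1-5)] "0.prems"(6) by simp
  then have "std_gram4 a b c d"
    using "0.prems" by (simp add: std_gram4_def exc4_def exc_gram4_def chi_eq_two_cross cross_rank_one)
  then show ?case
    using "0.prems"(1) by blast
next
  case (Suc n)
  note shift = rank_one_shift_steps[OF Suc.prems(1,2,3,6)]
  have exb: "exceptional_basis [a, b, c, d]"
    using Suc.prems(1) by (simp add: exceptional_basis_4_iff)
  show ?case
  proof (cases "0 < cross b c")
    case True
    have "exc4 b (- Rmut b a) c d"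
      using mut_steps_exceptional[OF shift(1) exb] by (simp add: exceptional_basis_4_iff)
    then obtain a' b' c' d' where "mut_step\<^sup>*\<^sup>* [b, - Rmut b a, c, d] [a', b', c', d']" "exc4 a' b' c' d'"
        "std_gram4 a' b' c' d'"
      using Suc.IH[of b "- Rmut b a" c d] Suc.prems True shift(2,3) by (auto simp: cross_rank_one)
    then show ?thesis
      using shift(1) by (meson rtranclp_trans)
  next
    case False
    have "exc4 (- Lmut a b) a c d"
      using mut_steps_exceptional[OF shift(4) exb] by (simp add: exceptional_basis_4_iff)
    then obtain a' b' c' d' where "mut_step\<^sup>*\<^sup>* [- Lmut a b, a, c, d] [a', b', c', d']" "exc4 a' b' c' d'"
        "std_gram4 a' b' c' d'"
      using Suc.IH[of "- Lmut a b" a c d] Suc.prems False shift(5,6) by (auto simp: cross_rank_one)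
    then show ?thesis
      using shift(4) by (meson rtranclp_trans)
  qed
qed

lemma mut_steps_std_gram:
  assumes "exceptional_basis es"
  shows "\<exists>a b c d. mut_step\<^sup>*\<^sup>* es [a, b, c, d] \<and> exc4 a b c d \<and> std_gram4 a b c d"
proof -
  obtain a b c d where steps: "mut_step\<^sup>*\<^sup>* es [a, b, c, d]" and ex: "exc4 a b c d"
    and r: "rk a = 1" "rk b = 1" "rk c = 1" "rk d = 1"
    using mut_steps_rank_one[OF assms] by blast
  consider "cross a b = 1" | "cross b c = 1"
    using rank_one_cross_cases[OF ex r] by blast
  then show ?thesis
  proof cases
    case 1
    then obtain a' b' c' d' where "mut_step\<^sup>*\<^sup>* [a, b, c, d] [a', b', c', d']" "exc4 a' b' c' d'"
        "std_gram4 a' b' c' d'"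
      using mut_steps_std_gram_rank_one[OF ex r 1, of "nat \<bar>cross b c\<bar>"] by auto
    then show ?thesis
      using steps by (meson rtranclp_trans)
  next
    case 2
    have rot: "mut_step\<^sup>*\<^sup>* [a, b, c, d] [serre_op d, a, b, c]" and ex': "exc4 (serre_op d) a b c"
      using mut_steps_rotate[OF ex] by blast+
    have "cross (serre_op d) a = 1"
      using rank_one_cross_sum[OF ex r] 2 r by (simp add: cross_serre_op_left cross_rank_one)
    then obtain a' b' c' d' where "mut_step\<^sup>*\<^sup>* [serre_op d, a, b, c] [a', b', c', d']"
        "exc4 a' b' c' d'" "std_gram4 a' b' c' d'"
      using mut_steps_std_gram_rank_one[OF ex' _ r(1-3), of "nat \<bar>cross a b\<bar>"] r by (auto simp: rk_serre_op)
    then show ?thesis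
      using steps rot by (meson rtranclp_trans)
  qed
qed

section \<open>Isometries between bases\<close>

lemma chi_sum_right: "chi w (\<Sum>i\<in>I. f i) = (\<Sum>i\<in>I. chi w (f i))"
  by (induction I rule: infinite_finite_induct) (simp_all add: chi_bilinear)

lemma chi_lin_comb:
  "chi (lin_comb c es) (lin_comb d es) =
     (\<Sum>j<length es. \<Sum>i<length es. c i * d j * chi (es!i) (es!j))"
  by (simp add: lin_comb_def chi_sum_left chi_sum_right chi_bilinear sum_distrib_left algebra_simps)

lemma lin_comb_add: "lin_comb c es + lin_comb d es = lin_comb (\<lambda>i. c i + d i) es"
  by (simp add: lin_comb_def sum.distrib[symmetric] zsmult_def vec_eq_iff algebra_simps)

lemma lin_comb_diff: "lin_comb c es - lin_comb d es = lin_comb (\<lambda>i. c i - d i) es"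
  by (simp add: lin_comb_def sum_subtractf[symmetric] zsmult_def vec_eq_iff algebra_simps)

lemma lin_comb_cong: "(\<And>i. i < length es \<Longrightarrow> c i = d i) \<Longrightarrow> lin_comb c es = lin_comb d es"
  by (simp add: lin_comb_def)

lemma lin_comb_coeffs_eq:
  assumes "is_Zbasis es" "lin_comb c es = lin_comb d es" "i < length es"
  shows "c i = d i"
  using assms lin_comb_diff[of c es d] unfolding is_Zbasis_def by force

lemma lin_comb_nth:
  assumes "i < length es" shows "lin_comb (\<lambda>j. if j = i then 1 else 0) es = es!i"
proof -
  have "zsmult (if j = i then 1 else 0) (es!j) = (if j = i then es!j else 0)" for j
    by (simp add: zsmult_def vec_eq_iff)
  then show ?thesis
    using assms by (simp add: lin_comb_def)
qed

definition basis_map :: "K0 list \<Rightarrow> K0 list \<Rightarrow> K0 \<Rightarrow> K0" where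
  "basis_map es fs x = lin_comb (SOME c. x = lin_comb c es) fs"

lemma basis_map_lin_comb:
  assumes "is_Zbasis es" "length fs = length es"
  shows "basis_map es fs (lin_comb c es) = lin_comb c fs"
proof -
  let ?c = "SOME c'. lin_comb c es = lin_comb c' es"
  have "lin_comb c es = lin_comb ?c es"
    by (rule someI[where x = c]) simp
  then have "?c i = c i" if "i < length es" for i
    using lin_comb_coeffs_eq[OF assms(1)] that by metis
  then show ?thesis
    unfolding basis_map_def using assms(2) by (intro lin_comb_cong) simp
qed

lemma bij_basis_map:
  assumes es: "is_Zbasis es" and fs: "is_Zbasis fs" and len: "length fs = length es"
  shows "bij (basis_map es fs)"
proof (rule bijI)
  show "inj (basis_map es fs)"
  proof (rule injI)
    fix x y assume eq: "basis_map es fs x = basis_map es fs y"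
    obtain c d where x: "x = lin_comb c es" and y: "y = lin_comb d es"
      using es unfolding is_Zbasis_def by meson
    have "c i = d i" if "i < length es" for i
      using eq lin_comb_coeffs_eq[OF fs] len that unfolding x y basis_map_lin_comb[OF es len] by simp
    then show "x = y"
      unfolding x y by (rule lin_comb_cong)
  qed
  have "z \<in> range (basis_map es fs)" for z
  proof -
    obtain c where "z = lin_comb c fs"
      using fs unfolding is_Zbasis_def by blast
    then show ?thesis
      by (metis basis_map_lin_comb[OF es len] rangeI)
  qed
  then show "surj (basis_map es fs)"
    by blast
qed

lemma isometry_basis_map:
  assumes es: "is_Zbasis es" and fs: "is_Zbasis fs" and len: "length fs = length es"
    and gram: "\<And>i j. i < length es \<Longrightarrow> j < length es \<Longrightarrow> chi (fs!i) (fs!j) = chi (es!i) (es!j)"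
  shows "isometry (basis_map es fs)" and "map (basis_map es fs) es = fs"
proof -
  let ?f = "basis_map es fs"
  have "?f (x + y) = ?f x + ?f y" "chi (?f x) (?f y) = chi x y" for x y
  proof -
    obtain c d where x: "x = lin_comb c es" and y: "y = lin_comb d es"
      using es unfolding is_Zbasis_def by meson
    show "?f (x + y) = ?f x + ?f y"
      unfolding x y lin_comb_add basis_map_lin_comb[OF es len] ..
    have "(\<Sum>j<length es. \<Sum>i<length es. c i * d j * chi (fs!i) (fs!j))
        = (\<Sum>j<length es. \<Sum>i<length es. c i * d j * chi (es!i) (es!j))"
      by (intro sum.cong refl) (simp add: gram)
    then show "chi (?f x) (?f y) = chi x y"
      unfolding x y basis_map_lin_comb[OF es len] chi_lin_comb len .
  qed
  then show "isometry ?f"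
    using bij_basis_map[OF es fs len] by (simp add: isometry_def)
  have "?f (es!i) = fs!i" if "i < length es" for i
    using basis_map_lin_comb[OF es len] lin_comb_nth that len by metis
  then show "map ?f es = fs"
    using len by (simp add: list_eq_iff_nth_eq)
qed

lemma isometry_between_std_bases:
  assumes ex: "exc4 a b c d" "std_gram4 a b c d" and ex': "exc4 a' b' c' d'" "std_gram4 a' b' c' d'"
  shows "\<exists>\<phi>. isometry \<phi> \<and> map \<phi> [a, b, c, d] = [a', b', c', d']"
proof -
  have "is_Zbasis [a, b, c, d]" "is_Zbasis [a', b', c', d']"
    using ex(1) ex'(1) by (simp_all add: exceptional_basis_4_iff[symmetric] exceptional_basis_def)
  moreover have "chi ([a', b', c', d']!i) ([a', b', c', d']!j) = chi ([a, b, c, d]!i) ([a, b, c, d]!j)"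
    if "i < 4" "j < 4" for i j
    using that ex ex' by (auto simp: less_Suc_eq numeral_eq_Suc exc4_def exc_gram4_def std_gram4_def)
  ultimately show ?thesis
    using isometry_basis_map[of "[a, b, c, d]" "[a', b', c', d']"] by auto
qed

definition sym_isotropic :: "K0 \<Rightarrow> bool" where
  "sym_isotropic q \<longleftrightarrow> (\<forall>v. chi q v = chi v q) \<and> chi q q = 0"

lemma sym_isotropic_iff: "sym_isotropic q \<longleftrightarrow> (\<exists>k. q = zsmult k pt)"
proof
  assume q: "sym_isotropic q"
  then have sym: "chi q v = chi v q" for v
    unfolding sym_isotropic_def by blast
  have iso: "chi q q = 0"
    using q unfolding sym_isotropic_def by blast
  have "cross q v = 0" for v
    using chi_antisym[of q v] sym[of v] by simp
  from this[of "vec4 1 0 0 0"] this[of "vec4 (-1) 1 0 0"] have q: "q$0 = q$3" "q$2 = - 2 * q$3 - q$1"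
    by (simp_all add: cross_def rk_def deg_def)
  have "chi q q = 2 * (q$3 + q$1) * (q$3 + q$1)"
    unfolding chi_def q by (simp add: algebra_simps)
  then have "q$1 = - q$3"
    using iso by simp linarith
  then have "q = zsmult (q$3) pt"
    using q by (simp add: K0_eq_iff)
  then show "\<exists>k. q = zsmult k pt"
    by blast
next
  assume "\<exists>k. q = zsmult k pt"
  then obtain k where "q = zsmult k pt"
    by blast
  then show "sym_isotropic q"
    by (simp add: sym_isotropic_def chi_bilinear chi_pt rk_def)
qed

lemma sym_isotropic_isometry:
  assumes iso: "isometry \<phi>" shows "sym_isotropic (\<phi> q) \<longleftrightarrow> sym_isotropic q"
proof -
  have "surj \<phi>"
    using iso by (simp add: isometry_def bij_def)
  then have "(\<forall>v. chi (\<phi> q) v = chi v (\<phi> q)) \<longleftrightarrow> (\<forall>u. chi (\<phi> q) (\<phi> u) = chi (\<phi> u) (\<phi> q))"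
    by (metis surj_def)
  then show ?thesis
    unfolding sym_isotropic_def by (simp add: isometry_chi[OF iso])
qed

text \<open>Since \<open>sym_isotropic\<close> singles out the multiples of \<open>pt\<close> and is invariant under
  isometries, an isometry maps \<open>pt\<close> to a multiple \<open>k pt\<close> and some multiple \<open>k' pt\<close> to
  \<open>pt\<close>, so \<open>k k' = 1\<close>.\<close>

lemma isometry_pt:
  assumes iso: "isometry \<phi>"
  shows "\<phi> pt = pt \<or> \<phi> pt = - pt"
proof -
  have "sym_isotropic pt"
    by (auto simp: sym_isotropic_iff K0_eq_iff intro: exI[of _ 1])
  then obtain k where k: "\<phi> pt = zsmult k pt"
    using sym_isotropic_isometry[OF iso] sym_isotropic_iff by blast
  obtain y where y: "pt = \<phi> y"
    using iso by (metis isometry_def bij_def surj_def)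
  then obtain k' where "y = zsmult k' pt"
    using \<open>sym_isotropic pt\<close> sym_isotropic_isometry[OF iso] sym_isotropic_iff by metis
  then have "pt = zsmult k' (zsmult k pt)"
    using y k isometry_zsmult[OF iso] by simp
  then have "k' * k = 1"
    by (simp add: K0_eq_iff)
  then have "k = 1 \<or> k = -1"
    by (simp add: zmult_eq_1_iff) blast
  then show ?thesis
    using k by (auto simp: K0_eq_iff)
qed

lemma isometry_negate: "isometry \<phi> \<Longrightarrow> isometry (\<lambda>x. - \<phi> x)"
  using bij_comp[of \<phi> uminus] isometry_uminus unfolding isometry_def by (auto simp: comp_def chi_bilinear)

lemma exists_isometry_fixing_pt:
  assumes iso: "isometry \<psi>" and steps: "mut_step\<^sup>*\<^sup>* (map \<psi> es) fs" and fs: "exceptional_basis fs"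
  shows "\<exists>\<phi>. isometry \<phi> \<and> \<phi> pt = pt \<and> mut_step\<^sup>*\<^sup>* (map \<phi> es) fs"
proof (cases "\<psi> pt = pt")
  case False
  then have "\<psi> pt = - pt"
    using isometry_pt[OF iso] by blast
  moreover obtain a b c d where fs4: "fs = [a, b, c, d]"
    using fs by (rule exceptional_basis_4E)
  have "mut_step\<^sup>*\<^sup>* (map uminus (map \<psi> es)) (map uminus fs)"
    using mut_steps_map_isometry[OF isometry_uminus steps] .
  then have "mut_step\<^sup>*\<^sup>* (map (\<lambda>x. - \<psi> x) es) fs"
    using mut_steps_neg_4 fs4 by (simp add: comp_def) (meson rtranclp_trans)
  ultimately show ?thesis
    using isometry_negate[OF iso] by auto
qed (use iso steps in blast)

theorem mainTheorem5:
  fixes es fs :: "K0 list"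
  assumes "exceptional_basis es" and "exceptional_basis fs"
  shows "\<exists>\<phi>. isometry \<phi> \<and> \<phi> pt = pt \<and> mut_step\<^sup>*\<^sup>* (map \<phi> es) fs"
proof -
  obtain a b c d where to_std: "mut_step\<^sup>*\<^sup>* es [a, b, c, d]" and std: "exc4 a b c d" "std_gram4 a b c d"
    using mut_steps_std_gram[OF assms(1)] by blast
  obtain a' b' c' d' where to_std': "mut_step\<^sup>*\<^sup>* fs [a', b', c', d']"
    and std': "exc4 a' b' c' d'" "std_gram4 a' b' c' d'"
    using mut_steps_std_gram[OF assms(2)] by blast
  obtain \<psi> where iso: "isometry \<psi>" and maps: "map \<psi> [a, b, c, d] = [a', b', c', d']"
    using isometry_between_std_bases[OF std std'] by auto
  have "mut_step\<^sup>*\<^sup>* (map \<psi> es) [a', b', c', d']"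
    using mut_steps_map_isometry[OF iso to_std] maps by simp
  moreover have "mut_step\<^sup>*\<^sup>* [a', b', c', d'] fs"
    using mut_steps_sym[OF to_std' assms(2)] .
  ultimately have "mut_step\<^sup>*\<^sup>* (map \<psi> es) fs"
    by (rule rtranclp_trans)
  then show ?thesis
    using exists_isometry_fixing_pt[OF iso _ assms(2)] by blast
qed

end
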